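(* Assume $\ell$ is bounded. Let $C_1,C_2>0$. Define $\bar L^+_i=\ell(W,\widetilde{Z}^{i,0}_{1,\overline{U}^{i,0}_1})$, $L^{i+}_j=\ell(W,\widetilde{Z}^{i,V_i}_{j,0})$, and the shifted Rademacher variables $\tilde\varepsilon_i=(-1)^{\overline{V}_i}-\frac{C_1}{C_1+2}$ and $\tilde\varepsilon^{i,V_i}_j=(-1)^{\overline{U}^{i,V_i}_j}-\frac{C_2}{C_2+2}$. Then $$\mathbb{E}[L_{\mathcal{D}}(W)]-(1+C_1)\mathbb{E}[L_{\mu_{[K]}}(W)]=\frac{2+C_1}{K}\sum_{i=1}^K\mathbb{E}\big[\tilde\varepsilon_i\bar L^+_i\big],$$ $$\mathbb{E}[L_{\mu_{[K]}}(W)]-(1+C_2)\mathbb{E}[L_S(W)]=\frac{2+C_2}{Kn}\sum_{i=1}^K\sum_{j=1}^n\mathbb{E}\big[\tilde\varepsilon^{i,V_i}_jL^{i+}_j\big].$$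
   Context: Setting. $\mathcal{Z}$ is an instance space, $\mathcal{W}$ a hypothesis space, $\mathcal{C}$ a set of clients; each client $c\in\mathcal{C}$ has a data distribution $\mu_c$ on $\mathcal{Z}$, and $\mathcal{D}$ is a probability distribution on $\mathcal{C}$ (so a draw from $\mathcal{D}$ yields a data distribution on $\mathcal{Z}$). A loss $\ell:\mathcal{W}\times\mathcal{Z}\to[0,\infty)$ is given. There are $K$ participating clients, each with $n$ training points. A federated learning (FL) algorithm $\mathcal{A}$ is a conditional distribution $P_{W|S}$ mapping the collective training sample $S=(S_1,\dots,S_K)\in\mathcal{Z}^{nK}$ to a hypothesis $W\in\mathcal{W}$. Superclient/supersample construction. Let $\tilde\mu=(\tilde\mu_{i,b})_{i\in[K],b\in\{0,1\}}$ have i.i.d. entries drawn from $\mathcal{D}$. Conditionally on $\tilde\mu$, for each $(i,b)$ let $\widetilde{Z}^{i,b}=(\widetilde{Z}^{i,b}_{j,c})_{j\in[n],c\in\{0,1\}}$ have i.i.d. entries drawn from $\tilde\mu_{i,b}$, independently over $(i,b)$. Let $V=(V_1,\dots,V_K)$ and $U^{i,b}=(U^{i,b}_j)_{j\in[n]}$ ($i\in[K]$, $b\in\{0,1\}$) be mutually independent $\mathrm{Unif}\{0,1\}$ random variables, independent of $(\tilde\mu,\widetilde{Z})$. Write $\overline{V}_i=1-V_i$, $\overline{U}^{i,b}_j=1-U^{i,b}_j$. The $i$-th participating client distribution is $\mu_i=\tilde\mu_{i,V_i}$ and its training set is $S_i=(Z_{i,1},\dots,Z_{i,n})$ with $Z_{i,j}=\widetilde{Z}^{i,V_i}_{j,U^{i,V_i}_j}$;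 $S=(S_1,\dots,S_K)$. Given all of these variables, $W\sim P_{W|S}$. Risks. $L_{\mathcal{D}}(w)=\mathbb{E}_{\mu\sim\mathcal{D}}\mathbb{E}_{Z\sim\mu}\ell(w,Z)$; $L_{\mu_i}(w)=\mathbb{E}_{Z\sim\mu_i}\ell(w,Z)$; $L_{\mu_{[K]}}(w)=\frac1K\sum_{i=1}^K L_{\mu_i}(w)$; $L_S(w)=\frac{1}{Kn}\sum_{i=1}^K\sum_{j=1}^n\ell(w,Z_{i,j})$. *)

theory Defs
  imports "HOL-Probability.Probability"
begin

text \<open>Bits b, c, V_i, U^{i,b}_j in {0,1} are encoded as bool (True = 1).
  Indices i in [K] and j in [n] are 0-based: i < K, j < n.\<close>

definition coin :: "bool measure" where
  "coin = measure_pmf (pmf_of_set (UNIV :: bool set))"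

definition clientIdx :: "nat \<Rightarrow> (nat \<times> bool) set" where
  "clientIdx K = {..<K} \<times> UNIV"

definition zIdx :: "nat \<Rightarrow> nat \<Rightarrow> (nat \<times> bool \<times> nat \<times> bool) set" where
  "zIdx K n = {..<K} \<times> UNIV \<times> {..<n} \<times> UNIV"

definition uIdx :: "nat \<Rightarrow> nat \<Rightarrow> (nat \<times> bool \<times> nat) set" where
  "uIdx K n = {..<K} \<times> UNIV \<times> {..<n}"

definition sIdx :: "nat \<Rightarrow> nat \<Rightarrow> (nat \<times> nat) set" where
  "sIdx K n = {..<K} \<times> {..<n}"

definition sample_of ::
  "nat \<Rightarrow> nat \<Rightarrow> (nat \<times> bool \<times> nat \<times> bool \<Rightarrow> 'z) \<Rightarrow> (nat \<Rightarrow> bool)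
     \<Rightarrow> (nat \<times> bool \<times> nat \<Rightarrow> bool) \<Rightarrow> (nat \<times> nat \<Rightarrow> 'z)" where
  "sample_of K n zt v u = restrict (\<lambda>(i, j). zt (i, v i, j, u (i, v i, j))) (sIdx K n)"

definition outM :: "'c measure \<Rightarrow> 'z measure \<Rightarrow> 'w measure \<Rightarrow> nat \<Rightarrow> nat \<Rightarrow>
   ((nat \<times> bool \<Rightarrow> 'c) \<times> (nat \<times> bool \<times> nat \<times> bool \<Rightarrow> 'z) \<times> (nat \<Rightarrow> bool)
     \<times> (nat \<times> bool \<times> nat \<Rightarrow> bool) \<times> 'w) measure" where
  "outM D Zm Wm K n =
     PiM (clientIdx K) (\<lambda>_. D) \<Otimes>\<^sub>M PiM (zIdx K n) (\<lambda>_. Zm) \<Otimes>\<^sub>M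
     PiM {..<K} (\<lambda>_. coin) \<Otimes>\<^sub>M PiM (uIdx K n) (\<lambda>_. coin) \<Otimes>\<^sub>M Wm"

text \<open>Joint law of the superclient/supersample construction together with W ~ P_{W|S}:
  mutilde_{i,b} iid D; given mutilde, Ztilde^{i,b}_{j,c} independent with law mu(mutilde_{i,b});
  V, U independent uniform bits; W drawn from the algorithm kernel A at S.\<close>
definition fl_joint :: "'c measure \<Rightarrow> ('c \<Rightarrow> 'z measure) \<Rightarrow> 'z measure \<Rightarrow> 'w measure
   \<Rightarrow> ((nat \<times> nat \<Rightarrow> 'z) \<Rightarrow> 'w measure) \<Rightarrow> nat \<Rightarrow> nat \<Rightarrow>
   ((nat \<times> bool \<Rightarrow> 'c) \<times> (nat \<times> bool \<times> nat \<times> bool \<Rightarrow> 'z) \<times> (nat \<Rightarrow> bool)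
     \<times> (nat \<times> bool \<times> nat \<Rightarrow> bool) \<times> 'w) measure" where
  "fl_joint D mu Zm Wm A K n =
     bind (PiM (clientIdx K) (\<lambda>_. D)) (\<lambda>mt.
     bind (PiM (zIdx K n) (\<lambda>(i, b, j, c). mu (mt (i, b)))) (\<lambda>zt.
     bind (PiM {..<K} (\<lambda>_. coin)) (\<lambda>v.
     bind (PiM (uIdx K n) (\<lambda>_. coin)) (\<lambda>u.
     bind (A (sample_of K n zt v u)) (\<lambda>w.
     return (outM D Zm Wm K n) (mt, zt, v, u, w))))))"

definition risk :: "'z measure \<Rightarrow> ('w \<Rightarrow> 'z \<Rightarrow> real) \<Rightarrow> 'w \<Rightarrow> real" where
  "risk m loss w = (\<integral>z. loss w z \<partial>m)"

definition pop_risk :: "'c measure \<Rightarrow> ('c \<Rightarrow> 'z measure) \<Rightarrow> ('w \<Rightarrow> 'z \<Rightarrow> real) \<Rightarrow> 'w \<Rightarrow> real" where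
  "pop_risk D mu loss w = (\<integral>c. risk (mu c) loss w \<partial>D)"

definition emp_risk :: "nat \<Rightarrow> nat \<Rightarrow> ('w \<Rightarrow> 'z \<Rightarrow> real) \<Rightarrow> (nat \<times> nat \<Rightarrow> 'z) \<Rightarrow> 'w \<Rightarrow> real" where
  "emp_risk K n loss s w = (1 / (real K * real n)) * (\<Sum>i<K. \<Sum>j<n. loss w (s (i, j)))"

end

theory Submission
  imports Defs
begin

text \<open>Condition on the selection bits V and U. Given them, a supersample point that is not in
  the training sample is a fresh draw from its superclient, and the data distribution of an
  unselected superclient is a fresh draw from D, both independent of W. So the loss at such a point
  has the expectation of the corresponding risk, and the risk of an unselected superclient averages
  to the population risk. Swapping the two superclients of every pair (V to not V) or the two points
  of every pair (U to not U) preserves the joint law and the training sample, so a risk weighted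
  by the indicator of a bit has the same expectation as when weighted by the indicator of its
  negation. Writing the shifted Rademacher weight as (1 - c) [b] - (1 + c) [not b] with
  c = C/(C + 2) and averaging over clients and points gives both identities.\<close>

lemma borel_measurable_kernel_integral[measurable (raw)]:
  fixes f :: "'a \<Rightarrow> 'b \<Rightarrow> real"
  assumes L: "L \<in> M \<rightarrow>\<^sub>M subprob_algebra N"
    and f: "(\<lambda>(x,y). f x y) \<in> borel_measurable (M \<Otimes>\<^sub>M N)"
  shows "(\<lambda>x. \<integral>y. f x y \<partial>L x) \<in> borel_measurable M"
proof -
  \<comment> \<open>Reduce to nonnegative integrals, whose measurability in the kernel is in the library.\<close>
  have eq: "(\<integral>y. f x y \<partial>L x) = (if (\<integral>\<^sup>+y. ennreal (norm (f x y)) \<partial>L x) < \<infinity>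
      then enn2real (\<integral>\<^sup>+y. ennreal (f x y) \<partial>L x) - enn2real (\<integral>\<^sup>+y. ennreal (- f x y) \<partial>L x) else 0)"
    if x: "x \<in> space M" for x
  proof -
    have "f x \<in> borel_measurable N" using measurable_Pair2[OF f x] by simp
    then have "f x \<in> borel_measurable (L x)"
      by (simp add: measurable_cong_sets[OF sets_kernel[OF L x] refl])
    then have "integrable (L x) (f x) \<longleftrightarrow> (\<integral>\<^sup>+y. ennreal (norm (f x y)) \<partial>L x) < \<infinity>"
      by (simp add: integrable_iff_bounded)
    then show ?thesis
      by (cases "integrable (L x) (f x)") (simp_all add: real_lebesgue_integral_def not_integrable_integral_eq)
  qed
  have [measurable]: "(\<lambda>x. \<integral>\<^sup>+y. ennreal (norm (f x y)) \<partial>L x) \<in> borel_measurable M"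
    "(\<lambda>x. \<integral>\<^sup>+y. ennreal (f x y) \<partial>L x) \<in> borel_measurable M"
    "(\<lambda>x. \<integral>\<^sup>+y. ennreal (- f x y) \<partial>L x) \<in> borel_measurable M"
    by (rule nn_integral_measurable_subprob_algebra2[OF _ L], use f in measurable)+
  show ?thesis
    by (subst measurable_cong[OF eq]) (assumption, measurable)
qed

lemma
  fixes f :: "_ \<Rightarrow> real"
  assumes f: "f \<in> borel_measurable L" and fb: "\<And>x. x \<in> space L \<Longrightarrow> \<bar>f x\<bar> \<le> C"
    and N: "N \<in> M \<rightarrow>\<^sub>M subprob_algebra L" and M: "prob_space M"
  shows integrable_bind_prob: "integrable (bind M N) f"
    and integral_bind_prob: "integral\<^sup>L (bind M N) f = (\<integral>x. integral\<^sup>L (N x) f \<partial>M)"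
proof -
  have fin: "finite_measure M" using M unfolding prob_space_def by simp
  have ae: "AE x in M. emeasure (N x) (space (N x)) \<le> ennreal 1"
    by (rule AE_I2) (use subprob_space_kernel[OF N] in \<open>simp add: subprob_space.subprob_emeasure_le_1\<close>)
  show "integrable (bind M N) f" by (rule integrable_bind[OF f fb N fin ae])
  show "integral\<^sup>L (bind M N) f = (\<integral>x. integral\<^sup>L (N x) f \<partial>M)" by (rule integral_bind[OF f fb N fin ae])
qed

lemma integrable_bounded_prob:
  fixes f :: "'a \<Rightarrow> real"
  assumes "prob_space M" and "f \<in> borel_measurable M" and "\<And>x. x \<in> space M \<Longrightarrow> \<bar>f x\<bar> \<le> C"
  shows "integrable M f"
  using assms by (intro finite_measure.integrable_const_bound[where B=C])
    (auto simp: prob_space_def)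

lemma abs_integral_bounded_prob:
  fixes f :: "'a \<Rightarrow> real"
  assumes M: "prob_space M" and f: "f \<in> borel_measurable M" and b: "\<And>x. x \<in> space M \<Longrightarrow> \<bar>f x\<bar> \<le> C"
  shows "\<bar>\<integral>x. f x \<partial>M\<bar> \<le> C"
proof -
  interpret prob_space M by fact
  have i: "integrable M f" using integrable_bounded_prob[OF M f b] .
  have "(\<integral>x. f x \<partial>M) \<le> C"
    by (intro integral_le_const i AE_I2) (use b in \<open>simp add: abs_le_iff\<close>)
  moreover have "- C \<le> (\<integral>x. f x \<partial>M)"
  proof (intro integral_ge_const i AE_I2)
    show "- C \<le> f x" if "x \<in> space M" for x using b[OF that] by linarith
  qed
  ultimately show ?thesis by simp
qed

lemma Fubini_bounded_prob:
  fixes f :: "'a \<Rightarrow> 'b \<Rightarrow> real"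
  assumes M1: "prob_space M1" and M2: "prob_space M2"
    and f: "(\<lambda>(x,y). f x y) \<in> borel_measurable (M1 \<Otimes>\<^sub>M M2)"
    and b: "\<And>x y. x \<in> space M1 \<Longrightarrow> y \<in> space M2 \<Longrightarrow> \<bar>f x y\<bar> \<le> C"
  shows "(\<integral>x. \<integral>y. f x y \<partial>M2 \<partial>M1) = (\<integral>y. \<integral>x. f x y \<partial>M1 \<partial>M2)"
proof -
  interpret pair_prob_space M1 M2
    using M1 M2 by (simp add: pair_prob_space_def pair_sigma_finite_def prob_space_imp_sigma_finite)
  have "integrable (M1 \<Otimes>\<^sub>M M2) (\<lambda>(x,y). f x y)"
    by (rule integrable_bounded_prob[OF prob_space_pair[OF M1 M2] f])
      (use b in \<open>auto simp: space_pair_measure\<close>)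
  from Fubini_integral[OF this] show ?thesis by simp
qed

text \<open>The product-measure locale needs a probability space at every index of the type; outside
  of the index set we put a Dirac measure.\<close>
definition pad_measures :: "'i set \<Rightarrow> ('i \<Rightarrow> 'a measure) \<Rightarrow> 'i \<Rightarrow> 'a measure" where
  "pad_measures I M i = (if i \<in> I then M i else return (count_space UNIV) undefined)"

lemma product_prob_space_pad_measures:
  "(\<And>i. i \<in> I \<Longrightarrow> prob_space (M i)) \<Longrightarrow> product_prob_space (pad_measures I M)"
  unfolding product_prob_space_def product_prob_space_axioms_def product_sigma_finite_def
    pad_measures_def
  by (auto intro!: prob_space_imp_sigma_finite prob_space_return)

lemma PiM_pad_measures: "J \<subseteq> I \<Longrightarrow> PiM J (pad_measures I M) = PiM J M"
  by (rule PiM_cong) (auto simp: pad_measures_def)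

lemma emeasure_PiM_PiE_prob:
  assumes "finite I" "\<And>i. i \<in> I \<Longrightarrow> prob_space (M i)" "\<And>i. i \<in> I \<Longrightarrow> X i \<in> sets (M i)"
  shows "emeasure (PiM I M) (Pi\<^sub>E I X) = (\<Prod>i\<in>I. emeasure (M i) (X i))"
proof -
  interpret product_prob_space "pad_measures I M"
    using product_prob_space_pad_measures assms(2) .
  have "emeasure (PiM I (pad_measures I M)) (Pi\<^sub>E I X) = (\<Prod>i\<in>I. emeasure (pad_measures I M i) (X i))"
    using assms by (intro emeasure_PiM) (auto simp: pad_measures_def)
  then show ?thesis using PiM_pad_measures[of I I M] by (simp add: pad_measures_def)
qed

lemma integral_PiM_restrict_prob:
  fixes H :: "_ \<Rightarrow> real"
  assumes fin: "finite I" and J: "J \<subseteq> I" and prob: "\<And>i. i \<in> I \<Longrightarrow> prob_space (M i)"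
    and H: "H \<in> borel_measurable (PiM J M)"
    and inv: "\<And>x. x \<in> space (PiM I M) \<Longrightarrow> H (restrict x J) = H x"
  shows "(\<integral>x. H x \<partial>PiM I M) = (\<integral>x. H x \<partial>PiM J M)"
proof -
  interpret product_prob_space "pad_measures I M" using product_prob_space_pad_measures prob .
  have "distr (PiM I (pad_measures I M)) (PiM J (pad_measures I M)) (\<lambda>x. restrict x J)
      = PiM J (pad_measures I M)"
    by (rule distr_PiM_restrict_finite) (use fin J finite_subset in auto)
  then have d: "distr (PiM I M) (PiM J M) (\<lambda>x. restrict x J) = PiM J M"
    using PiM_pad_measures[OF J, of M] PiM_pad_measures[of I I M] by simp
  have "(\<integral>x. H x \<partial>PiM J M) = (\<integral>x. H (restrict x J) \<partial>PiM I M)"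
    by (subst d[symmetric], rule integral_distr) (use J H measurable_restrict_subset in auto)
  also have "\<dots> = (\<integral>x. H x \<partial>PiM I M)"
    by (rule Bochner_Integration.integral_cong[OF refl]) (use inv in auto)
  finally show ?thesis by simp
qed
lemma integral_PiM_resample:
  fixes g :: "('i \<Rightarrow> 'a) \<Rightarrow> 'a \<Rightarrow> real"
  assumes fin: "finite I" and k: "k \<in> I" and prob: "\<And>i. i \<in> I \<Longrightarrow> prob_space (M i)"
    and gm: "(\<lambda>(x,y). g x y) \<in> borel_measurable (PiM I M \<Otimes>\<^sub>M M k)"
    and gb: "\<And>x y. x \<in> space (PiM I M) \<Longrightarrow> y \<in> space (M k) \<Longrightarrow> \<bar>g x y\<bar> \<le> C"
    and inv: "\<And>x y y'. x \<in> space (PiM I M) \<Longrightarrow> y \<in> space (M k) \<Longrightarrow> y' \<in> space (M k) \<Longrightarrow>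
      g (x(k:=y')) y = g x y"
  shows "(\<integral>x. g x (x k) \<partial>PiM I M) = (\<integral>x. \<integral>y. g x y \<partial>M k \<partial>PiM I M)"
proof -
  interpret product_prob_space "pad_measures I M" using product_prob_space_pad_measures prob .
  have Mk: "prob_space (M k)" using prob k .
  have Ieq: "insert k (I - {k}) = I" using k by auto
  have PI: "PiM I (pad_measures I M) = PiM I M" using PiM_pad_measures[of I I M] by simp
  have PJ: "PiM (I - {k}) (pad_measures I M) = PiM (I - {k}) M"
    using PiM_pad_measures[of "I - {k}" I M] by auto
  have pk: "pad_measures I M k = M k" using k by (simp add: pad_measures_def)
  have upd: "x(k := y) \<in> space (PiM I M)" if "x \<in> space (PiM (I - {k}) M)" "y \<in> space (M k)" for x y
    using that k by (auto simp: space_PiM PiE_iff extensional_def split: if_splits)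
  have m1: "(\<lambda>x. g x (x k)) \<in> borel_measurable (PiM I M)"
    using measurable_compose[OF measurable_Pair[OF measurable_ident_sets[OF refl]
        measurable_component_singleton[OF k]] gm]
    by simp
  have m2: "(\<lambda>x. \<integral>y. g x y \<partial>M k) \<in> borel_measurable (PiM I M)"
  proof (rule borel_measurable_kernel_integral[where N = "M k"])
    show "(\<lambda>x. M k) \<in> PiM I M \<rightarrow>\<^sub>M subprob_algebra (M k)"
      by (rule measurable_const) (use Mk in \<open>auto simp: space_subprob_algebra prob_space_imp_subprob_space\<close>)
  qed (use gm in simp)
  have i1: "integrable (PiM (insert k (I - {k})) (pad_measures I M)) (\<lambda>x. g x (x k))"
    unfolding Ieq PI
    by (rule integrable_bounded_prob[OF prob_space_PiM[OF prob] m1])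
      (use gb measurable_space[OF measurable_component_singleton[OF k]] in auto)
  have i2: "integrable (PiM (insert k (I - {k})) (pad_measures I M)) (\<lambda>x. \<integral>y. g x y \<partial>M k)"
    unfolding Ieq PI
  proof (rule integrable_bounded_prob[OF prob_space_PiM[OF prob] m2, where C=C])
    fix x assume x: "x \<in> space (PiM I M)"
    have "g x \<in> borel_measurable (M k)" using measurable_Pair2[OF gm x] by simp
    then show "\<bar>\<integral>y. g x y \<partial>M k\<bar> \<le> C" by (rule abs_integral_bounded_prob[OF Mk]) (use gb x in auto)
  qed
  have "(\<integral>x. g x (x k) \<partial>PiM I M) = (\<integral>x. \<integral>y. g (x(k:=y)) y \<partial>M k \<partial>PiM (I - {k}) M)"
    using product_integral_insert[OF finite_Diff[OF fin] _ i1] PI PJ pk Ieq by simp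
  also have "\<dots> = (\<integral>x. \<integral>y'. \<integral>y. g (x(k:=y')) y \<partial>M k \<partial>M k \<partial>PiM (I - {k}) M)"
  proof (rule Bochner_Integration.integral_cong[OF refl])
    fix x assume x: "x \<in> space (PiM (I - {k}) M)"
    have "(\<integral>y'. \<integral>y. g (x(k:=y')) y \<partial>M k \<partial>M k) = (\<integral>y'. (\<integral>y. g (x(k:=y)) y \<partial>M k) \<partial>M k)"
    proof (intro Bochner_Integration.integral_cong[OF refl])
      fix y' y assume y': "y' \<in> space (M k)" and y: "y \<in> space (M k)"
      have "g ((x(k:=y))(k:=y')) y = g (x(k:=y)) y" by (rule inv[OF upd[OF x y] y y'])
      then show "g (x(k:=y')) y = g (x(k:=y)) y" by simp
    qed
    also have "\<dots> = (\<integral>y. g (x(k:=y)) y \<partial>M k)"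
      using prob_space.prob_space[OF Mk] by simp
    finally show "(\<integral>y. g (x(k:=y)) y \<partial>M k) = (\<integral>y'. \<integral>y. g (x(k:=y')) y \<partial>M k \<partial>M k)" ..
  qed
  also have "\<dots> = (\<integral>x. \<integral>y. g x y \<partial>M k \<partial>PiM I M)"
    using product_integral_insert[OF finite_Diff[OF fin] _ i2] PI PJ pk Ieq by simp
  finally show ?thesis .
qed

lemma distr_PiM_reindex_bij:
  assumes "bij_betw p I I" and "\<And>i. i \<in> I \<Longrightarrow> prob_space (M i)"
  shows "distr (PiM I M) (PiM I (\<lambda>i. M (p i))) (\<lambda>\<omega>. \<lambda>k\<in>I. \<omega> (p k)) = PiM I (\<lambda>i. M (p i))"
  by (rule distr_PiM_reindex) (use assms in \<open>auto simp: bij_betw_def\<close>)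

lemma measurable_PiM_reindex:
  assumes p: "bij_betw p I I"
  shows "(\<lambda>\<omega>. \<lambda>k\<in>I. \<omega> (p k)) \<in> PiM I (\<lambda>_. N) \<rightarrow>\<^sub>M PiM I (\<lambda>_. N)"
proof (rule measurable_restrict)
  fix k assume "k \<in> I"
  then have "p k \<in> I" using p by (auto simp: bij_betw_def)
  then show "(\<lambda>\<omega>. \<omega> (p k)) \<in> PiM I (\<lambda>_. N) \<rightarrow>\<^sub>M N" by measurable
qed

lemma sets_coin[simp]: "sets coin = UNIV" and space_coin[simp]: "space coin = UNIV"
  unfolding coin_def by simp_all

lemma prob_space_coin[simp]: "prob_space coin"
  unfolding coin_def by (rule prob_space_measure_pmf)

lemma measurable_from_coin[measurable]: "f \<in> coin \<rightarrow>\<^sub>M count_space UNIV"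
  by (simp add: measurable_cong_sets[of coin "count_space UNIV" N N for N, OF _ refl])

lemma measurable_coin_coin: "f \<in> coin \<rightarrow>\<^sub>M coin"
  by (auto simp: measurable_def)

lemma distr_coin_Not: "distr coin coin Not = coin"
proof -
  have "distr coin coin Not = distr coin (count_space UNIV) Not"
    by (rule distr_cong) auto
  also have "\<dots> = measure_pmf (map_pmf Not (pmf_of_set UNIV))"
    unfolding coin_def map_pmf_rep_eq ..
  also have "map_pmf Not (pmf_of_set (UNIV::bool set)) = pmf_of_set (Not ` UNIV)"
    by (rule map_pmf_of_set_inj) (auto simp: inj_def)
  also have "Not ` UNIV = UNIV" by (auto simp: UNIV_bool)
  finally show ?thesis unfolding coin_def .
qed

lemma measurable_PiM_coin_Not: "(\<lambda>v. \<lambda>i\<in>I. \<not> v i) \<in> PiM I (\<lambda>_. coin) \<rightarrow>\<^sub>M PiM I (\<lambda>_. coin)"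
proof (rule measurable_restrict)
  fix i assume i: "i \<in> I"
  show "(\<lambda>v. \<not> v i) \<in> PiM I (\<lambda>_. coin) \<rightarrow>\<^sub>M coin"
    using measurable_compose[OF measurable_component_singleton[OF i] measurable_coin_coin[of Not]]
    by simp
qed

lemma distr_PiM_coin_Not:
  assumes "finite I"
  shows "distr (PiM I (\<lambda>_. coin)) (PiM I (\<lambda>_. coin)) (\<lambda>v. \<lambda>i\<in>I. \<not> v i) = PiM I (\<lambda>_. coin)"
proof -
  have "distr (PiM I (\<lambda>_. coin)) (PiM I (\<lambda>_. coin)) (compose I Not) = PiM I (\<lambda>i. distr coin coin Not)"
    by (rule distr_PiM_finite_prob_space') (use assms measurable_coin_coin in auto)
  moreover have "compose I Not = (\<lambda>v. \<lambda>i\<in>I. \<not> v i)" by (rule ext) (simp add: compose_def)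
  ultimately show ?thesis by (simp add: distr_coin_Not)
qed

lemma integral_measure_preserving:
  fixes f :: "'a \<Rightarrow> real"
  assumes "T \<in> M \<rightarrow>\<^sub>M M" and "distr M M T = M" and "f \<in> borel_measurable M"
  shows "(\<integral>x. f (T x) \<partial>M) = (\<integral>x. f x \<partial>M)"
  using integral_distr[OF assms(1,3)] assms(2) by simp
lemma shifted_rademacher_identity:
  fixes X Y Z :: "'a \<Rightarrow> real" and b :: "'a \<Rightarrow> bool" and C :: real
  assumes X: "integrable M X" and Y: "integrable M Y" and Z: "integrable M Z"
    and b: "Measurable.pred M b"
    and X_on_b: "(\<integral>x. of_bool (b x) * X x \<partial>M) = (\<integral>x. of_bool (b x) * Y x \<partial>M)"
    and X_off_b: "(\<integral>x. of_bool (\<not> b x) * X x \<partial>M) = (\<integral>x. of_bool (\<not> b x) * Z x \<partial>M)"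
    and Y_sym: "(\<integral>x. of_bool (b x) * Y x \<partial>M) = (\<integral>x. of_bool (\<not> b x) * Y x \<partial>M)"
    and Z_sym: "(\<integral>x. of_bool (b x) * Z x \<partial>M) = (\<integral>x. of_bool (\<not> b x) * Z x \<partial>M)"
    and C: "C + 2 \<noteq> 0"
  shows "(2 + C) * (\<integral>x. ((-1::real) ^ (1 - of_bool (b x)) - C / (C + 2)) * X x \<partial>M)
    = (\<integral>x. Y x \<partial>M) - (1 + C) * (\<integral>x. Z x \<partial>M)"
proof -
  define c where "c = C / (C + 2)"
  have restrict_integrable: "integrable M (\<lambda>x. of_bool (P x) * F x)"
    if F: "integrable M F" and P: "Measurable.pred M P"
    for F :: "'a \<Rightarrow> real" and P :: "'a \<Rightarrow> bool"
  proof (rule Bochner_Integration.integrable_bound[OF F])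
    show "(\<lambda>x. of_bool (P x) * F x) \<in> borel_measurable M"
      using P borel_measurable_integrable[OF F] by measurable
  qed (simp add: of_bool_def)
  have nb: "Measurable.pred M (\<lambda>x. \<not> b x)" using b by measurable
  have split: "(\<integral>x. F x \<partial>M) = (\<integral>x. of_bool (b x) * F x \<partial>M) + (\<integral>x. of_bool (\<not> b x) * F x \<partial>M)"
    if F: "integrable M F" for F :: "'a \<Rightarrow> real"
  proof -
    have "(\<integral>x. F x \<partial>M) = (\<integral>x. of_bool (b x) * F x + of_bool (\<not> b x) * F x \<partial>M)"
      by (intro Bochner_Integration.integral_cong) simp_all
    then show ?thesis
      using restrict_integrable[OF F b] restrict_integrable[OF F nb] by simp
  qed
  define y1 where "y1 = (\<integral>x. of_bool (b x) * Y x \<partial>M)"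
  define z0 where "z0 = (\<integral>x. of_bool (\<not> b x) * Z x \<partial>M)"
  have "(\<integral>x. ((-1::real) ^ (1 - of_bool (b x)) - c) * X x \<partial>M)
      = (\<integral>x. (1 - c) * (of_bool (b x) * X x) + (-1 - c) * (of_bool (\<not> b x) * X x) \<partial>M)"
    by (intro Bochner_Integration.integral_cong) (simp_all add: algebra_simps)
  also have "\<dots> = (1 - c) * y1 + (-1 - c) * z0"
    using restrict_integrable[OF X b] restrict_integrable[OF X nb] X_on_b X_off_b
    by (simp add: y1_def z0_def)
  finally have X_eq: "(\<integral>x. ((-1::real) ^ (1 - of_bool (b x)) - c) * X x \<partial>M) = (1 - c) * y1 + (-1 - c) * z0" .
  have c1: "(2 + C) * (1 - c) = 2" and c2: "(2 + C) * (-1 - c) = - 2 * (1 + C)"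
    using C by (simp_all add: c_def field_simps)
  have YZ: "(\<integral>x. Y x \<partial>M) = 2 * y1" "(\<integral>x. Z x \<partial>M) = 2 * z0"
    using split[OF Y] split[OF Z] Y_sym Z_sym by (simp_all add: y1_def z0_def)
  have "(2 + C) * (\<integral>x. ((-1::real) ^ (1 - of_bool (b x)) - C / (C + 2)) * X x \<partial>M)
      = ((2 + C) * (1 - c)) * y1 + ((2 + C) * (-1 - c)) * z0"
    unfolding c_def[symmetric] X_eq by (simp add: algebra_simps)
  also have "\<dots> = 2 * y1 - (1 + C) * (2 * z0)"
    unfolding c1 c2 by (simp add: ring_distribs)
  finally show ?thesis unfolding YZ .
qed
locale fl_setting =
  fixes D :: "'c measure" and mu :: "'c \<Rightarrow> 'z measure" and Zm :: "'z measure"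
    and Wm :: "'w measure" and A :: "(nat \<times> nat \<Rightarrow> 'z) \<Rightarrow> 'w measure"
    and loss :: "'w \<Rightarrow> 'z \<Rightarrow> real" and K n :: nat and B :: real
  assumes D: "prob_space D"
    and mu: "mu \<in> D \<rightarrow>\<^sub>M prob_algebra Zm"
    and A: "A \<in> PiM (sIdx K n) (\<lambda>_. Zm) \<rightarrow>\<^sub>M prob_algebra Wm"
    and loss: "case_prod loss \<in> borel_measurable (Wm \<Otimes>\<^sub>M Zm)"
    and nonneg: "\<And>w z. 0 \<le> loss w z"
    and bnd: "\<And>w z. loss w z \<le> B"
    and Kpos: "0 < K" and npos: "0 < n"
begin

definition "clientsM = PiM (clientIdx K) (\<lambda>_. D)"
definition "ZM = PiM (zIdx K n) (\<lambda>_. Zm)"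
definition "supersampleM mt = PiM (zIdx K n) (\<lambda>(i,b,j,c). mu (mt (i,b)))"
definition "VM = PiM {..<K} (\<lambda>_. coin)"
definition "UM = PiM (uIdx K n) (\<lambda>_. coin)"
definition "SM = PiM (sIdx K n) (\<lambda>_. Zm)"
definition "OM = outM D Zm Wm K n"

lemma finite_index_sets[simp]:
  "finite (clientIdx K)" "finite (zIdx K n)" "finite (uIdx K n)" "finite (sIdx K n)"
  by (auto simp: clientIdx_def zIdx_def uIdx_def sIdx_def)

lemma mu_subprob[measurable]: "mu \<in> D \<rightarrow>\<^sub>M subprob_algebra Zm"
  using measurable_prob_algebraD[OF mu] .

lemma A_subprob[measurable]: "A \<in> SM \<rightarrow>\<^sub>M subprob_algebra Wm"
  using measurable_prob_algebraD[OF A] by (simp add: SM_def)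

lemma measurable_loss[measurable (raw)]:
  "f \<in> N \<rightarrow>\<^sub>M Wm \<Longrightarrow> g \<in> N \<rightarrow>\<^sub>M Zm \<Longrightarrow> (\<lambda>x. loss (f x) (g x)) \<in> borel_measurable N"
  using measurable_compose[OF measurable_Pair loss, of f N g] by simp

lemma prob_space_mu: "c \<in> space D \<Longrightarrow> prob_space (mu c)"
  and sets_mu: "c \<in> space D \<Longrightarrow> sets (mu c) = sets Zm"
  using measurable_space[OF mu, of c] by (simp_all add: space_prob_algebra)

lemma client_in_space: "mt \<in> space clientsM \<Longrightarrow> i < K \<Longrightarrow> mt (i, b) \<in> space D"
  by (auto simp: clientsM_def space_PiM clientIdx_def)

lemma sets_supersampleM: "mt \<in> space clientsM \<Longrightarrow> sets (supersampleM mt) = sets ZM"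
  unfolding supersampleM_def ZM_def
  by (rule sets_PiM_cong) (auto simp: zIdx_def prob_space_mu sets_mu client_in_space)

lemma space_supersampleM: "mt \<in> space clientsM \<Longrightarrow> space (supersampleM mt) = space ZM"
  using sets_supersampleM sets_eq_imp_space_eq by blast

lemma prob_space_supersampleM: "mt \<in> space clientsM \<Longrightarrow> prob_space (supersampleM mt)"
  unfolding supersampleM_def by (rule prob_space_PiM) (auto simp: zIdx_def prob_space_mu sets_mu client_in_space)

lemma measurable_supersampleM: "supersampleM \<in> clientsM \<rightarrow>\<^sub>M prob_algebra ZM"
proof (rule measurable_prob_algebra_generated[where \<Omega> = "space ZM" and G = "prod_algebra (zIdx K n) (\<lambda>_. Zm)"])
  show "sets ZM = sigma_sets (space ZM) (prod_algebra (zIdx K n) (\<lambda>_. Zm))"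
    unfolding ZM_def by (simp add: sets_PiM space_PiM)
  show "Int_stable (prod_algebra (zIdx K n) (\<lambda>_. Zm))" by (rule Int_stable_prod_algebra)
  show "prod_algebra (zIdx K n) (\<lambda>_. Zm) \<subseteq> Pow (space ZM)"
    unfolding ZM_def space_PiM by (rule prod_algebra_sets_into_space)
  show "prob_space (supersampleM a)" if "a \<in> space clientsM" for a using prob_space_supersampleM that .
  show "sets (supersampleM a) = sets ZM" if "a \<in> space clientsM" for a using sets_supersampleM that .
  fix X assume "X \<in> prod_algebra (zIdx K n) (\<lambda>_. Zm)"
  then obtain E where X: "X = Pi\<^sub>E (zIdx K n) E" and E: "E \<in> (\<Pi> i\<in>zIdx K n. sets Zm)"
    by (rule prod_algebraE_all)
  have eq: "emeasure (supersampleM mt) X = (\<Prod>k\<in>zIdx K n. emeasure (mu (mt (fst k, fst (snd k)))) (E k))"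
    if mt: "mt \<in> space clientsM" for mt
    unfolding X supersampleM_def
    by (subst emeasure_PiM_PiE_prob) (use E mt in \<open>auto simp: zIdx_def prob_space_mu sets_mu client_in_space case_prod_beta\<close>)
  have m: "(\<lambda>mt. emeasure (mu (mt (fst k, fst (snd k)))) (E k)) \<in> borel_measurable clientsM" if k: "k \<in> zIdx K n" for k
  proof -
    have "(fst k, fst (snd k)) \<in> clientIdx K" using k by (auto simp: zIdx_def clientIdx_def)
    then have "(\<lambda>mt. mt (fst k, fst (snd k))) \<in> clientsM \<rightarrow>\<^sub>M D" unfolding clientsM_def by measurable
    moreover have "E k \<in> sets Zm" using E k by auto
    ultimately show ?thesis
      by (intro measurable_compose[OF _ measurable_emeasure_subprob_algebra[of "E k" Zm]] measurable_compose[OF _ mu_subprob])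
  qed
  show "(\<lambda>a. emeasure (supersampleM a) X) \<in> borel_measurable clientsM"
    by (subst measurable_cong[OF eq]) (auto intro!: borel_measurable_prod_ennreal m)
qed

lemma subprob_supersampleM[measurable]: "supersampleM \<in> clientsM \<rightarrow>\<^sub>M subprob_algebra ZM"
  using measurable_prob_algebraD[OF measurable_supersampleM] .


lemma const_subprob_kernels[measurable]:
  "(\<lambda>x. clientsM) \<in> N \<rightarrow>\<^sub>M subprob_algebra clientsM" "(\<lambda>x. VM) \<in> N \<rightarrow>\<^sub>M subprob_algebra VM"
  "(\<lambda>x. UM) \<in> N \<rightarrow>\<^sub>M subprob_algebra UM" "(\<lambda>x. D) \<in> N \<rightarrow>\<^sub>M subprob_algebra D"
  by (auto intro!: measurable_const prob_space_imp_subprob_space prob_space_PiM D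
     simp: space_subprob_algebra clientsM_def VM_def UM_def)

lemma prob_space_clientsM[simp]: "prob_space clientsM"
  and prob_space_VM[simp]: "prob_space VM" and prob_space_UM[simp]: "prob_space UM"
  by (auto intro!: prob_space_PiM D simp: clientsM_def VM_def UM_def)

lemma measurable_coin_component:
  assumes "g \<in> N \<rightarrow>\<^sub>M PiM I (\<lambda>_. coin)" "i \<in> I"
  shows "(\<lambda>x. g x i) \<in> N \<rightarrow>\<^sub>M count_space UNIV"
proof -
  have "(\<lambda>x. g x i) \<in> N \<rightarrow>\<^sub>M coin" using assms by measurable
  then show ?thesis using measurable_from_coin measurable_comp[of _ N coin "\<lambda>b. b" "count_space UNIV"]
    by (simp add: o_def)
qed

lemma measurable_V_component:
  "g \<in> N \<rightarrow>\<^sub>M VM \<Longrightarrow> a < K \<Longrightarrow> Measurable.pred N (\<lambda>x. g x a)"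
  unfolding VM_def by (erule measurable_coin_component) simp

lemma measurable_U_component:
  assumes g: "g \<in> N \<rightarrow>\<^sub>M UM" and h: "Measurable.pred N h" and a: "a < K" and b: "b < n"
  shows "Measurable.pred N (\<lambda>x. g x (a, h x, b))"
proof -
  have eq: "g x (a, h x, b) = (if h x then g x (a, True, b) else g x (a, False, b))" for x by simp
  have c: "(\<lambda>x. g x (a, c, b)) \<in> N \<rightarrow>\<^sub>M count_space UNIV" for c
    using g a b unfolding UM_def by (intro measurable_coin_component) (auto simp: uIdx_def)
  show ?thesis unfolding eq by (rule measurable_If[OF c c]) (use h in \<open>simp add: pred_def\<close>)
qed

lemma measurable_ZM_select:
  assumes f: "f \<in> N \<rightarrow>\<^sub>M ZM" and h1: "Measurable.pred N h1" and h2: "Measurable.pred N h2"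
    and a: "a < K" and b: "b < n"
  shows "(\<lambda>x. f x (a, h1 x, b, h2 x)) \<in> N \<rightarrow>\<^sub>M Zm"
proof -
  have c: "(\<lambda>x. f x (a, c, b, d)) \<in> N \<rightarrow>\<^sub>M Zm" for c d
    using measurable_compose[OF f[unfolded ZM_def] measurable_component_singleton[of "(a, c, b, d)"]] a b
    by (simp add: zIdx_def)
  have "f x (a, h1 x, b, h2 x) = (if h1 x then (if h2 x then f x (a, True, b, True) else f x (a, True, b, False))
     else (if h2 x then f x (a, False, b, True) else f x (a, False, b, False)))" for x by simp
  then show ?thesis using h1 h2 by (simp add: pred_def) (intro measurable_If c; assumption)
qed

lemma measurable_clientsM_select:
  assumes f: "f \<in> N \<rightarrow>\<^sub>M clientsM" and h: "Measurable.pred N h" and a: "a < K"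
  shows "(\<lambda>x. f x (a, h x)) \<in> N \<rightarrow>\<^sub>M D"
proof -
  have c: "(\<lambda>x. f x (a, c)) \<in> N \<rightarrow>\<^sub>M D" for c
    using measurable_compose[OF f[unfolded clientsM_def] measurable_component_singleton[of "(a, c)"]] a
    by (simp add: clientIdx_def)
  have "f x (a, h x) = (if h x then f x (a, True) else f x (a, False))" for x by simp
  then show ?thesis using h by (simp add: pred_def) (intro measurable_If c; assumption)
qed

lemma measurable_sample_of[measurable (raw)]:
  assumes f: "f \<in> N \<rightarrow>\<^sub>M ZM" and g: "g \<in> N \<rightarrow>\<^sub>M VM" and h: "h \<in> N \<rightarrow>\<^sub>M UM"
  shows "(\<lambda>x. sample_of K n (f x) (g x) (h x)) \<in> N \<rightarrow>\<^sub>M SM"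
  unfolding sample_of_def SM_def
proof (rule measurable_restrict)
  fix k assume "k \<in> sIdx K n"
  then obtain i j where k: "k = (i, j)" and i: "i < K" and j: "j < n" by (auto simp: sIdx_def)
  have gi: "Measurable.pred N (\<lambda>x. g x i)" by (rule measurable_V_component[OF g i])
  show "(\<lambda>x. (\<lambda>(i, j). f x (i, g x i, j, h x (i, g x i, j))) k) \<in> N \<rightarrow>\<^sub>M Zm"
    using measurable_ZM_select[OF f gi measurable_U_component[OF h gi i j] i j] by (simp add: k)
qed

lemma OM_eq: "OM = clientsM \<Otimes>\<^sub>M ZM \<Otimes>\<^sub>M VM \<Otimes>\<^sub>M UM \<Otimes>\<^sub>M Wm"
  by (simp add: OM_def outM_def clientsM_def ZM_def VM_def UM_def)

lemma fl_joint_eq_bind: "fl_joint D mu Zm Wm A K n = bind clientsM (\<lambda>mt. bind (supersampleM mt) (\<lambda>zt. bind VM (\<lambda>v. bind UM (\<lambda>u.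
   bind (A (sample_of K n zt v u)) (\<lambda>w. return OM (mt, zt, v, u, w))))))"
  by (simp add: fl_joint_def clientsM_def supersampleM_def VM_def UM_def OM_def)

abbreviation expect :: "(((nat \<times> bool \<Rightarrow> 'c) \<times> (nat \<times> bool \<times> nat \<times> bool \<Rightarrow> 'z) \<times> (nat \<Rightarrow> bool)
     \<times> (nat \<times> bool \<times> nat \<Rightarrow> bool) \<times> 'w) \<Rightarrow> real) \<Rightarrow> real" where
  "expect f \<equiv> integral\<^sup>L (fl_joint D mu Zm Wm A K n) f"

lemma measurable_client_kernel: "(\<lambda>mt. bind (supersampleM mt) (\<lambda>zt. bind VM (\<lambda>v. bind UM (\<lambda>u.
   bind (A (sample_of K n zt v u)) (\<lambda>w. return OM (mt, zt, v, u, w)))))) \<in> clientsM \<rightarrow>\<^sub>M subprob_algebra OM"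
  unfolding OM_eq by measurable


lemma sample_of_in_space: "zt \<in> space ZM \<Longrightarrow> v \<in> space VM \<Longrightarrow> u \<in> space UM \<Longrightarrow> sample_of K n zt v u \<in> space SM"
proof -
  assume [measurable]: "zt \<in> space ZM" "v \<in> space VM" "u \<in> space UM"
  have "(\<lambda>x. sample_of K n zt v x) \<in> UM \<rightarrow>\<^sub>M SM" by measurable
  from measurable_space[OF this \<open>u \<in> space UM\<close>] show ?thesis .
qed

lemma prob_space_A: "s \<in> space SM \<Longrightarrow> prob_space (A s)"
  and sets_A: "s \<in> space SM \<Longrightarrow> sets (A s) = sets Wm"
  using measurable_space[OF A, of s] by (simp_all add: space_prob_algebra SM_def)

definition "XM = clientsM \<Otimes>\<^sub>M ZM \<Otimes>\<^sub>M VM \<Otimes>\<^sub>M UM"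

definition "integral_W f mt zt v u = (\<integral>w. f (mt,zt,v,u,w) \<partial>A (sample_of K n zt v u))"

definition "iter_integral g =
  (\<integral>mt. \<integral>zt. \<integral>v. \<integral>u. g mt zt v u \<partial>UM \<partial>VM \<partial>supersampleM mt \<partial>clientsM)"

lemma integral_bind_A_return:
  fixes f :: "_ \<Rightarrow> real"
  assumes f[measurable]: "f \<in> borel_measurable OM" and fb: "\<And>x. x \<in> space OM \<Longrightarrow> \<bar>f x\<bar> \<le> C"
    and mt[measurable]: "mt \<in> space clientsM" and zt[measurable]: "zt \<in> space ZM"
    and v[measurable]: "v \<in> space VM" and u[measurable]: "u \<in> space UM"
  shows "integral\<^sup>L (bind (A (sample_of K n zt v u)) (\<lambda>w. return OM (mt, zt, v, u, w))) f
    = integral_W f mt zt v u"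
proof -
  have sS: "sample_of K n zt v u \<in> space SM" using sample_of_in_space zt v u by blast
  have m: "(\<lambda>w. return OM (mt, zt, v, u, w)) \<in> A (sample_of K n zt v u) \<rightarrow>\<^sub>M subprob_algebra OM"
    unfolding measurable_cong_sets[OF sets_A[OF sS] refl] unfolding OM_eq by measurable
  have "integral\<^sup>L (bind (A (sample_of K n zt v u)) (\<lambda>w. return OM (mt, zt, v, u, w))) f
      = (\<integral>w. integral\<^sup>L (return OM (mt, zt, v, u, w)) f \<partial>A (sample_of K n zt v u))"
    by (rule integral_bind_prob[OF f fb m prob_space_A[OF sS]])
  also have "\<dots> = integral_W f mt zt v u"
    unfolding integral_W_def
  proof (rule Bochner_Integration.integral_cong[OF refl])
    fix w assume "w \<in> space (A (sample_of K n zt v u))"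
    then have "w \<in> space Wm" using sets_eq_imp_space_eq[OF sets_A[OF sS]] by simp
    then have "(mt, zt, v, u, w) \<in> space OM" using mt zt v u by (simp add: OM_eq space_pair_measure)
    then show "integral\<^sup>L (return OM (mt, zt, v, u, w)) f = f (mt, zt, v, u, w)"
      by (rule integral_return) simp
  qed
  finally show ?thesis .
qed

lemma expectation_iter_integral:
  fixes f :: "_ \<Rightarrow> real"
  assumes f[measurable]: "f \<in> borel_measurable OM" and fb: "\<And>x. x \<in> space OM \<Longrightarrow> \<bar>f x\<bar> \<le> C"
  shows "expect f = iter_integral (integral_W f)"
proof -
  let ?kW = "\<lambda>mt zt v u. bind (A (sample_of K n zt v u)) (\<lambda>w. return OM (mt, zt, v, u, w))"
  have U: "integral\<^sup>L (bind UM (?kW mt zt v)) f = (\<integral>u. integral_W f mt zt v u \<partial>UM)"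
    if mt[measurable]: "mt \<in> space clientsM" and zt[measurable]: "zt \<in> space ZM"
      and v[measurable]: "v \<in> space VM" for mt zt v
  proof -
    have "?kW mt zt v \<in> UM \<rightarrow>\<^sub>M subprob_algebra OM" unfolding OM_eq by measurable
    from integral_bind_prob[OF f fb this prob_space_UM] show ?thesis
      using integral_bind_A_return[OF f fb mt zt v] by (simp cong: Bochner_Integration.integral_cong)
  qed
  have V: "integral\<^sup>L (bind VM (\<lambda>v. bind UM (?kW mt zt v))) f
      = (\<integral>v. \<integral>u. integral_W f mt zt v u \<partial>UM \<partial>VM)"
    if mt[measurable]: "mt \<in> space clientsM" and zt[measurable]: "zt \<in> space ZM" for mt zt
  proof -
    have "(\<lambda>v. bind UM (?kW mt zt v)) \<in> VM \<rightarrow>\<^sub>M subprob_algebra OM" unfolding OM_eq by measurable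
    from integral_bind_prob[OF f fb this prob_space_VM] show ?thesis
      using U[OF mt zt] by (simp cong: Bochner_Integration.integral_cong)
  qed
  have Z: "integral\<^sup>L (bind (supersampleM mt) (\<lambda>zt. bind VM (\<lambda>v. bind UM (?kW mt zt v)))) f
      = (\<integral>zt. \<integral>v. \<integral>u. integral_W f mt zt v u \<partial>UM \<partial>VM \<partial>supersampleM mt)"
    if mt[measurable]: "mt \<in> space clientsM" for mt
  proof -
    have "(\<lambda>zt. bind VM (\<lambda>v. bind UM (?kW mt zt v))) \<in> supersampleM mt \<rightarrow>\<^sub>M subprob_algebra OM"
      unfolding measurable_cong_sets[OF sets_supersampleM[OF mt] refl] unfolding OM_eq by measurable
    from integral_bind_prob[OF f fb this prob_space_supersampleM[OF mt]]
    have "integral\<^sup>L (bind (supersampleM mt) (\<lambda>zt. bind VM (\<lambda>v. bind UM (?kW mt zt v)))) f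
        = (\<integral>zt. integral\<^sup>L (bind VM (\<lambda>v. bind UM (?kW mt zt v))) f \<partial>supersampleM mt)"
      by simp
    also have "\<dots> = (\<integral>zt. \<integral>v. \<integral>u. integral_W f mt zt v u \<partial>UM \<partial>VM \<partial>supersampleM mt)"
      using V[OF mt] space_supersampleM[OF mt] by (intro Bochner_Integration.integral_cong) auto
    finally show ?thesis .
  qed
  have "expect f = (\<integral>mt. integral\<^sup>L
      (bind (supersampleM mt) (\<lambda>zt. bind VM (\<lambda>v. bind UM (?kW mt zt v)))) f \<partial>clientsM)"
    unfolding fl_joint_eq_bind
    by (rule integral_bind_prob[OF f fb measurable_client_kernel prob_space_clientsM])
  also have "\<dots> = iter_integral (integral_W f)"
    unfolding iter_integral_def using Z by (intro Bochner_Integration.integral_cong) auto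
  finally show ?thesis .
qed

lemma sets_pair_supersampleM: "mt \<in> space clientsM \<Longrightarrow> sets (supersampleM mt \<Otimes>\<^sub>M N) = sets (ZM \<Otimes>\<^sub>M N)"
  by (rule sets_pair_measure_cong[OF sets_supersampleM refl])

lemma measurable_iter_integrand:
  fixes g :: "_ \<Rightarrow> _ \<Rightarrow> _ \<Rightarrow> _ \<Rightarrow> real"
  assumes g: "(\<lambda>(mt,zt,v,u). g mt zt v u) \<in> borel_measurable XM"
  shows "f1 \<in> N \<rightarrow>\<^sub>M clientsM \<Longrightarrow> f2 \<in> N \<rightarrow>\<^sub>M ZM \<Longrightarrow> f3 \<in> N \<rightarrow>\<^sub>M VM \<Longrightarrow> f4 \<in> N \<rightarrow>\<^sub>M UM \<Longrightarrow>
    (\<lambda>x. g (f1 x) (f2 x) (f3 x) (f4 x)) \<in> borel_measurable N"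
  using measurable_compose[OF _ g, of "\<lambda>x. (f1 x, f2 x, f3 x, f4 x)" N] unfolding XM_def by simp

lemma abs_integral_supersampleM_le:
  fixes h :: "_ \<Rightarrow> real"
  assumes mt: "mt \<in> space clientsM" and h: "h \<in> borel_measurable ZM"
    and hb: "\<And>zt. zt \<in> space ZM \<Longrightarrow> \<bar>h zt\<bar> \<le> C"
  shows "\<bar>\<integral>zt. h zt \<partial>supersampleM mt\<bar> \<le> C"
  by (rule abs_integral_bounded_prob[OF prob_space_supersampleM[OF mt]])
    (use h hb in \<open>simp_all add: measurable_cong_sets[OF sets_supersampleM[OF mt] refl] space_supersampleM[OF mt]\<close>)

lemma integral_supersampleM_swap_VU:
  fixes g :: "_ \<Rightarrow> _ \<Rightarrow> _ \<Rightarrow> _ \<Rightarrow> real"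
  assumes g: "(\<lambda>(mt,zt,v,u). g mt zt v u) \<in> borel_measurable XM"
    and gb: "\<And>mt zt v u. mt \<in> space clientsM \<Longrightarrow> zt \<in> space ZM \<Longrightarrow> v \<in> space VM \<Longrightarrow> u \<in> space UM \<Longrightarrow>
      \<bar>g mt zt v u\<bar> \<le> C"
    and mt[measurable]: "mt \<in> space clientsM"
  shows "(\<integral>zt. \<integral>v. \<integral>u. g mt zt v u \<partial>UM \<partial>VM \<partial>supersampleM mt)
    = (\<integral>v. \<integral>u. \<integral>zt. g mt zt v u \<partial>supersampleM mt \<partial>UM \<partial>VM)"
proof -
  note measurable_iter_integrand[OF g, measurable (raw)]
  have "(\<integral>zt. \<integral>v. \<integral>u. g mt zt v u \<partial>UM \<partial>VM \<partial>supersampleM mt)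
      = (\<integral>v. \<integral>zt. \<integral>u. g mt zt v u \<partial>UM \<partial>supersampleM mt \<partial>VM)"
  proof (rule Fubini_bounded_prob[OF prob_space_supersampleM[OF mt] prob_space_VM])
    show "(\<lambda>(zt, v). \<integral>u. g mt zt v u \<partial>UM) \<in> borel_measurable (supersampleM mt \<Otimes>\<^sub>M VM)"
      unfolding measurable_cong_sets[OF sets_pair_supersampleM[OF mt] refl] by measurable
    fix zt v assume "zt \<in> space (supersampleM mt)" "v \<in> space VM"
    then show "\<bar>\<integral>u. g mt zt v u \<partial>UM\<bar> \<le> C"
      by (intro abs_integral_bounded_prob[OF prob_space_UM])
        (auto simp: space_supersampleM[OF mt] intro: gb[OF mt])
  qed
  also have "\<dots> = (\<integral>v. \<integral>u. \<integral>zt. g mt zt v u \<partial>supersampleM mt \<partial>UM \<partial>VM)"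
  proof (rule Bochner_Integration.integral_cong[OF refl])
    fix v assume v[measurable]: "v \<in> space VM"
    show "(\<integral>zt. \<integral>u. g mt zt v u \<partial>UM \<partial>supersampleM mt) = (\<integral>u. \<integral>zt. g mt zt v u \<partial>supersampleM mt \<partial>UM)"
    proof (rule Fubini_bounded_prob[OF prob_space_supersampleM[OF mt] prob_space_UM])
      show "(\<lambda>(zt, u). g mt zt v u) \<in> borel_measurable (supersampleM mt \<Otimes>\<^sub>M UM)"
        unfolding measurable_cong_sets[OF sets_pair_supersampleM[OF mt] refl] by measurable
    qed (use gb mt v in \<open>auto simp: space_supersampleM[OF mt]\<close>)
  qed
  finally show ?thesis .
qed

lemma iter_integral_VU_outer:
  fixes g :: "_ \<Rightarrow> _ \<Rightarrow> _ \<Rightarrow> _ \<Rightarrow> real"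
  assumes g: "(\<lambda>(mt,zt,v,u). g mt zt v u) \<in> borel_measurable XM"
    and gb: "\<And>mt zt v u. mt \<in> space clientsM \<Longrightarrow> zt \<in> space ZM \<Longrightarrow> v \<in> space VM \<Longrightarrow> u \<in> space UM \<Longrightarrow>
      \<bar>g mt zt v u\<bar> \<le> C"
  shows "iter_integral g = (\<integral>v. \<integral>u. \<integral>mt. \<integral>zt. g mt zt v u \<partial>supersampleM mt \<partial>clientsM \<partial>UM \<partial>VM)"
proof -
  note measurable_iter_integrand[OF g, measurable (raw)]
  have inner_le: "\<bar>\<integral>zt. g mt zt v u \<partial>supersampleM mt\<bar> \<le> C"
    if mt[measurable]: "mt \<in> space clientsM" and v[measurable]: "v \<in> space VM"
      and u[measurable]: "u \<in> space UM" for mt v u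
  proof (rule abs_integral_supersampleM_le[OF mt])
    show "(\<lambda>zt. g mt zt v u) \<in> borel_measurable ZM" by measurable
  qed (use gb mt v u in auto)
  have "iter_integral g = (\<integral>mt. \<integral>v. \<integral>u. \<integral>zt. g mt zt v u \<partial>supersampleM mt \<partial>UM \<partial>VM \<partial>clientsM)"
    unfolding iter_integral_def
    by (intro Bochner_Integration.integral_cong[OF refl] integral_supersampleM_swap_VU[OF g gb])
  also have "\<dots> = (\<integral>v. \<integral>mt. \<integral>u. \<integral>zt. g mt zt v u \<partial>supersampleM mt \<partial>UM \<partial>clientsM \<partial>VM)"
  proof (rule Fubini_bounded_prob[OF prob_space_clientsM prob_space_VM])
    show "(\<lambda>(mt, v). \<integral>u. \<integral>zt. g mt zt v u \<partial>supersampleM mt \<partial>UM) \<in> borel_measurable (clientsM \<Otimes>\<^sub>M VM)"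
      by measurable
    fix mt v assume mt: "mt \<in> space clientsM" and v: "v \<in> space VM"
    show "\<bar>\<integral>u. \<integral>zt. g mt zt v u \<partial>supersampleM mt \<partial>UM\<bar> \<le> C"
    proof (rule abs_integral_bounded_prob[OF prob_space_UM])
      show "(\<lambda>u. \<integral>zt. g mt zt v u \<partial>supersampleM mt) \<in> borel_measurable UM" using mt v by measurable
    qed (use mt v inner_le in auto)
  qed
  also have "\<dots> = (\<integral>v. \<integral>u. \<integral>mt. \<integral>zt. g mt zt v u \<partial>supersampleM mt \<partial>clientsM \<partial>UM \<partial>VM)"
  proof (rule Bochner_Integration.integral_cong[OF refl])
    fix v assume v[measurable]: "v \<in> space VM"
    show "(\<integral>mt. \<integral>u. \<integral>zt. g mt zt v u \<partial>supersampleM mt \<partial>UM \<partial>clientsM)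
      = (\<integral>u. \<integral>mt. \<integral>zt. g mt zt v u \<partial>supersampleM mt \<partial>clientsM \<partial>UM)"
    proof (rule Fubini_bounded_prob[OF prob_space_clientsM prob_space_UM])
      show "(\<lambda>(mt, u). \<integral>zt. g mt zt v u \<partial>supersampleM mt) \<in> borel_measurable (clientsM \<Otimes>\<^sub>M UM)"
        by measurable
    qed (use inner_le v in auto)
  qed
  finally show ?thesis .
qed

lemma measurable_integral_W:
  fixes f :: "_ \<Rightarrow> real"
  assumes f: "f \<in> borel_measurable OM"
  shows "(\<lambda>(mt,zt,v,u). integral_W f mt zt v u) \<in> borel_measurable XM"
proof -
  have [measurable]: "f \<in> borel_measurable (clientsM \<Otimes>\<^sub>M ZM \<Otimes>\<^sub>M VM \<Otimes>\<^sub>M UM \<Otimes>\<^sub>M Wm)" using f by (simp add: OM_eq)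
  show ?thesis unfolding integral_W_def XM_def by measurable
qed

lemma abs_integral_W_le:
  fixes f :: "_ \<Rightarrow> real"
  assumes f: "f \<in> borel_measurable OM" and fb: "\<And>x. x \<in> space OM \<Longrightarrow> \<bar>f x\<bar> \<le> C"
    and mt: "mt \<in> space clientsM" and zt: "zt \<in> space ZM" and v: "v \<in> space VM" and u: "u \<in> space UM"
  shows "\<bar>integral_W f mt zt v u\<bar> \<le> C"
  unfolding integral_W_def
proof (rule abs_integral_bounded_prob[OF prob_space_A[OF sample_of_in_space[OF zt v u]]])
  have sA: "sets (A (sample_of K n zt v u)) = sets Wm" using sets_A[OF sample_of_in_space[OF zt v u]] .
  show "(\<lambda>w. f (mt, zt, v, u, w)) \<in> borel_measurable (A (sample_of K n zt v u))"
    unfolding measurable_cong_sets[OF sA refl] using f mt zt v u unfolding OM_eq by measurable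
  fix w assume "w \<in> space (A (sample_of K n zt v u))"
  then have "w \<in> space Wm" using sets_eq_imp_space_eq[OF sA] by simp
  then have "(mt, zt, v, u, w) \<in> space OM" using mt zt v u by (simp add: OM_eq space_pair_measure)
  then show "\<bar>f (mt, zt, v, u, w)\<bar> \<le> C" by (rule fb)
qed

lemma iter_integral_cong:
  assumes "\<And>mt zt v u. mt \<in> space clientsM \<Longrightarrow> zt \<in> space ZM \<Longrightarrow> v \<in> space VM \<Longrightarrow> u \<in> space UM \<Longrightarrow> g1 mt zt v u = g2 mt zt v u"
  shows "iter_integral g1 = iter_integral g2"
  unfolding iter_integral_def
proof (intro Bochner_Integration.integral_cong[OF refl])
  fix mt zt v u assume mt: "mt \<in> space clientsM" and zt: "zt \<in> space (supersampleM mt)" and v: "v \<in> space VM" and u: "u \<in> space UM"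
  show "g1 mt zt v u = g2 mt zt v u" using assms[OF mt _ v u] zt space_supersampleM[OF mt] by simp
qed


lemma distr_supersampleM_reindex:
  assumes pc: "bij_betw pc (clientIdx K) (clientIdx K)" and pz: "bij_betw pz (zIdx K n) (zIdx K n)"
    and pzc: "\<And>i b j c. (i,b,j,c) \<in> zIdx K n \<Longrightarrow> (fst (pz (i,b,j,c)), fst (snd (pz (i,b,j,c)))) = pc (i,b)"
    and mt: "mt \<in> space clientsM"
  shows "distr (supersampleM mt) (supersampleM (\<lambda>k\<in>clientIdx K. mt (pc k))) (\<lambda>zt. \<lambda>k\<in>zIdx K n. zt (pz k))
    = supersampleM (\<lambda>k\<in>clientIdx K. mt (pc k))"
proof -
  let ?M = "\<lambda>k. (\<lambda>(i,b,j,c). mu (mt (i,b))) (pz k)"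
  have "distr (supersampleM mt) (PiM (zIdx K n) ?M) (\<lambda>zt. \<lambda>k\<in>zIdx K n. zt (pz k)) = PiM (zIdx K n) ?M"
    unfolding supersampleM_def
    by (rule distr_PiM_reindex_bij[OF pz]) (use mt in \<open>auto simp: zIdx_def prob_space_mu client_in_space\<close>)
  moreover have "PiM (zIdx K n) ?M = supersampleM (\<lambda>k\<in>clientIdx K. mt (pc k))"
    unfolding supersampleM_def
  proof (rule PiM_cong[OF refl])
    fix k assume k: "k \<in> zIdx K n"
    obtain i b j c where kk: "k = (i,b,j,c)" by (cases k) auto
    have ib: "(i,b) \<in> clientIdx K" using k kk by (auto simp: zIdx_def clientIdx_def)
    have "(fst (pz k), fst (snd (pz k))) = pc (i,b)" using pzc k kk by simp
    then have "?M k = mu (mt (pc (i,b)))" by (cases "pz k") auto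
    then show "?M k = (\<lambda>(i,b,j,c). mu ((\<lambda>k\<in>clientIdx K. mt (pc k)) (i,b))) k"
      using ib kk by simp
  qed
  ultimately show ?thesis by simp
qed

lemma iter_integral_reindex:
  fixes g :: "_ \<Rightarrow> _ \<Rightarrow> _ \<Rightarrow> _ \<Rightarrow> real"
  assumes g: "(\<lambda>(mt,zt,v,u). g mt zt v u) \<in> borel_measurable XM"
    and pc: "bij_betw pc (clientIdx K) (clientIdx K)" and pz: "bij_betw pz (zIdx K n) (zIdx K n)"
    and pzc: "\<And>i b j c. (i,b,j,c) \<in> zIdx K n \<Longrightarrow> (fst (pz (i,b,j,c)), fst (snd (pz (i,b,j,c)))) = pc (i,b)"
    and vT: "vT \<in> VM \<rightarrow>\<^sub>M VM" "distr VM VM vT = VM" and uT: "uT \<in> UM \<rightarrow>\<^sub>M UM" "distr UM UM uT = UM"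
  shows "iter_integral (\<lambda>mt zt v u. g (\<lambda>k\<in>clientIdx K. mt (pc k)) (\<lambda>k\<in>zIdx K n. zt (pz k)) (vT v) (uT u))
    = iter_integral g"
proof -
  define mtT where "mtT mt = (\<lambda>k\<in>clientIdx K. mt (pc k))" for mt :: "nat \<times> bool \<Rightarrow> 'c"
  define ztT where "ztT zt = (\<lambda>k\<in>zIdx K n. zt (pz k))" for zt :: "nat \<times> bool \<times> nat \<times> bool \<Rightarrow> 'z"
  have mtT_m[measurable]: "mtT \<in> clientsM \<rightarrow>\<^sub>M clientsM"
    unfolding mtT_def[abs_def] clientsM_def by (rule measurable_PiM_reindex[OF pc])
  have ztT_m[measurable]: "ztT \<in> ZM \<rightarrow>\<^sub>M ZM"
    unfolding ztT_def[abs_def] ZM_def by (rule measurable_PiM_reindex[OF pz])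
  note measurable_iter_integrand[OF g, measurable (raw)]
  note [measurable] = vT(1) uT(1)
  define F where "F a b = (\<integral>v. \<integral>u. g a b v u \<partial>UM \<partial>VM)" for a b
  have F_m[measurable]: "(\<lambda>(a,b). F a b) \<in> borel_measurable (clientsM \<Otimes>\<^sub>M ZM)"
    unfolding F_def by measurable
  have [measurable (raw)]: "f1 \<in> N \<rightarrow>\<^sub>M clientsM \<Longrightarrow> f2 \<in> N \<rightarrow>\<^sub>M ZM \<Longrightarrow>
      (\<lambda>x. F (f1 x) (f2 x)) \<in> borel_measurable N" for f1 f2 N
    using measurable_compose[OF _ F_m, of "\<lambda>x. (f1 x, f2 x)" N] by simp
  have bits: "(\<integral>v. \<integral>u. g a b (vT v) (uT u) \<partial>UM \<partial>VM) = F a b"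
    if a: "a \<in> space clientsM" and b: "b \<in> space ZM" for a b
  proof -
    have "(\<integral>u. g a b (vT v) (uT u) \<partial>UM) = (\<integral>u. g a b (vT v) u \<partial>UM)" if v: "v \<in> space VM" for v
      by (rule integral_measure_preserving[OF uT]) (use a b v in measurable)
    then have "(\<integral>v. \<integral>u. g a b (vT v) (uT u) \<partial>UM \<partial>VM) = (\<integral>v. \<integral>u. g a b (vT v) u \<partial>UM \<partial>VM)"
      by (rule Bochner_Integration.integral_cong[OF refl])
    also have "\<dots> = F a b"
      unfolding F_def by (rule integral_measure_preserving[OF vT]) (use a b in measurable)
    finally show ?thesis .
  qed
  have mtT_sp: "mtT mt \<in> space clientsM" if "mt \<in> space clientsM" for mt
    using measurable_space[OF mtT_m that] .
  have ztT_sp: "ztT zt \<in> space ZM" if "zt \<in> space ZM" for zt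
    using measurable_space[OF ztT_m that] .
  have data: "(\<integral>zt. F (mtT mt) (ztT zt) \<partial>supersampleM mt) = (\<integral>zt. F (mtT mt) zt \<partial>supersampleM (mtT mt))"
    if mt: "mt \<in> space clientsM" for mt
  proof -
    have m1: "ztT \<in> supersampleM mt \<rightarrow>\<^sub>M supersampleM (mtT mt)"
      unfolding measurable_cong_sets[OF sets_supersampleM[OF mt] sets_supersampleM[OF mtT_sp[OF mt]]]
      by (rule ztT_m)
    have m2: "F (mtT mt) \<in> borel_measurable (supersampleM (mtT mt))"
      unfolding measurable_cong_sets[OF sets_supersampleM[OF mtT_sp[OF mt]] refl] using mt by measurable
    show ?thesis
      using integral_distr[OF m1 m2] distr_supersampleM_reindex[OF pc pz pzc mt]
      by (simp add: mtT_def[abs_def] ztT_def[abs_def])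
  qed
  define H where "H a = (\<integral>zt. F a zt \<partial>supersampleM a)" for a
  have H_m: "H \<in> borel_measurable clientsM" unfolding H_def by measurable
  have clients: "distr clientsM clientsM mtT = clientsM"
    unfolding clientsM_def mtT_def[abs_def] using distr_PiM_reindex_bij[OF pc, of "\<lambda>_. D"] D by simp
  have "iter_integral (\<lambda>mt zt v u. g (\<lambda>k\<in>clientIdx K. mt (pc k)) (\<lambda>k\<in>zIdx K n. zt (pz k)) (vT v) (uT u))
      = (\<integral>mt. \<integral>zt. F (mtT mt) (ztT zt) \<partial>supersampleM mt \<partial>clientsM)"
    unfolding iter_integral_def mtT_def[symmetric] ztT_def[symmetric]
  proof (intro Bochner_Integration.integral_cong[OF refl])
    fix mt zt assume mt: "mt \<in> space clientsM" and zt: "zt \<in> space (supersampleM mt)"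
    show "(\<integral>v. \<integral>u. g (mtT mt) (ztT zt) (vT v) (uT u) \<partial>UM \<partial>VM) = F (mtT mt) (ztT zt)"
      by (rule bits[OF mtT_sp[OF mt] ztT_sp]) (use zt space_supersampleM[OF mt] in simp)
  qed
  also have "\<dots> = (\<integral>mt. H (mtT mt) \<partial>clientsM)"
    unfolding H_def by (intro Bochner_Integration.integral_cong[OF refl] data)
  also have "\<dots> = iter_integral g"
    unfolding integral_measure_preserving[OF mtT_m clients H_m]
    unfolding H_def F_def iter_integral_def ..
  finally show ?thesis .
qed

lemma expectation_reindex:
  fixes f1 f2 :: "_ \<Rightarrow> real"
  assumes f1: "f1 \<in> borel_measurable OM" and f1b: "\<And>x. x \<in> space OM \<Longrightarrow> \<bar>f1 x\<bar> \<le> C1"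
    and f2: "f2 \<in> borel_measurable OM" and f2b: "\<And>x. x \<in> space OM \<Longrightarrow> \<bar>f2 x\<bar> \<le> C2"
    and pc: "bij_betw pc (clientIdx K) (clientIdx K)" and pz: "bij_betw pz (zIdx K n) (zIdx K n)"
    and pzc: "\<And>i b j c. (i,b,j,c) \<in> zIdx K n \<Longrightarrow> (fst (pz (i,b,j,c)), fst (snd (pz (i,b,j,c)))) = pc (i,b)"
    and vT: "vT \<in> VM \<rightarrow>\<^sub>M VM" "distr VM VM vT = VM" and uT: "uT \<in> UM \<rightarrow>\<^sub>M UM" "distr UM UM uT = UM"
    and hs: "\<And>zt v u. zt \<in> space ZM \<Longrightarrow> v \<in> space VM \<Longrightarrow> u \<in> space UM \<Longrightarrow>
       sample_of K n (\<lambda>k\<in>zIdx K n. zt (pz k)) (vT v) (uT u) = sample_of K n zt v u"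
    and hf: "\<And>mt zt v u w. mt \<in> space clientsM \<Longrightarrow> zt \<in> space ZM \<Longrightarrow> v \<in> space VM \<Longrightarrow> u \<in> space UM \<Longrightarrow> w \<in> space Wm \<Longrightarrow>
       f2 (mt,zt,v,u,w) = f1 (\<lambda>k\<in>clientIdx K. mt (pc k), \<lambda>k\<in>zIdx K n. zt (pz k), vT v, uT u, w)"
  shows "expect f2 = expect f1"
proof -
  have "expect f2 = iter_integral (integral_W f2)" by (rule expectation_iter_integral[OF f2 f2b])
  also have "\<dots> = iter_integral (\<lambda>mt zt v u. integral_W f1 (\<lambda>k\<in>clientIdx K. mt (pc k)) (\<lambda>k\<in>zIdx K n. zt (pz k)) (vT v) (uT u))"
  proof (rule iter_integral_cong)
    fix mt zt v u assume mt: "mt \<in> space clientsM" and zt: "zt \<in> space ZM" and v: "v \<in> space VM" and u: "u \<in> space UM"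
    have sS: "sample_of K n zt v u \<in> space SM" using sample_of_in_space[OF zt v u] .
    show "integral_W f2 mt zt v u = integral_W f1 (\<lambda>k\<in>clientIdx K. mt (pc k)) (\<lambda>k\<in>zIdx K n. zt (pz k)) (vT v) (uT u)"
      unfolding integral_W_def hs[OF zt v u]
    proof (rule Bochner_Integration.integral_cong[OF refl])
      fix w assume "w \<in> space (A (sample_of K n zt v u))"
      then have "w \<in> space Wm" using sets_eq_imp_space_eq[OF sets_A[OF sS]] by simp
      then show "f2 (mt, zt, v, u, w) = f1 (\<lambda>k\<in>clientIdx K. mt (pc k), \<lambda>k\<in>zIdx K n. zt (pz k), vT v, uT u, w)"
        by (rule hf[OF mt zt v u])
    qed
  qed
  also have "\<dots> = iter_integral (integral_W f1)"
    by (rule iter_integral_reindex[OF measurable_integral_W[OF f1] pc pz pzc vT uT])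
  also have "\<dots> = expect f1" by (rule expectation_iter_integral[OF f1 f1b, symmetric])
  finally show ?thesis .
qed

lemma expectation_swap_superclients:
  fixes f1 f2 :: "_ \<Rightarrow> real"
  assumes f1: "f1 \<in> borel_measurable OM" and f1b: "\<And>x. x \<in> space OM \<Longrightarrow> \<bar>f1 x\<bar> \<le> C1"
    and f2: "f2 \<in> borel_measurable OM" and f2b: "\<And>x. x \<in> space OM \<Longrightarrow> \<bar>f2 x\<bar> \<le> C2"
    and hf: "\<And>mt zt v u w.
       f2 (mt,zt,v,u,w) = f1 (\<lambda>k\<in>clientIdx K. mt ((\<lambda>(i,b). (i, \<not> b)) k), \<lambda>k\<in>zIdx K n. zt ((\<lambda>(i,b,j,c). (i, \<not> b, j, c)) k),
          \<lambda>i\<in>{..<K}. \<not> v i, \<lambda>k\<in>uIdx K n. u ((\<lambda>(i,b,j). (i, \<not> b, j)) k), w)"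
  shows "expect f2 = expect f1"
proof (rule expectation_reindex[OF f1 f1b f2 f2b])
  show "bij_betw (\<lambda>(i,b). (i, \<not> b)) (clientIdx K) (clientIdx K)"
    by (rule bij_betwI[where g = "\<lambda>(i,b). (i, \<not> b)"]) (auto simp: clientIdx_def)
  show "bij_betw (\<lambda>(i,b,j,c). (i, \<not> b, j, c)) (zIdx K n) (zIdx K n)"
    by (rule bij_betwI[where g = "\<lambda>(i,b,j,c). (i, \<not> b, j, c)"]) (auto simp: zIdx_def)
  have bu: "bij_betw (\<lambda>(i,b,j). (i, \<not> b, j)) (uIdx K n) (uIdx K n)"
    by (rule bij_betwI[where g = "\<lambda>(i,b,j). (i, \<not> b, j)"]) (auto simp: uIdx_def)
  show "(\<lambda>u. \<lambda>k\<in>uIdx K n. u ((\<lambda>(i,b,j). (i, \<not> b, j)) k)) \<in> UM \<rightarrow>\<^sub>M UM"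
    unfolding UM_def by (rule measurable_PiM_reindex[OF bu])
  show "distr UM UM (\<lambda>u. \<lambda>k\<in>uIdx K n. u ((\<lambda>(i,b,j). (i, \<not> b, j)) k)) = UM"
    unfolding UM_def using distr_PiM_reindex_bij[OF bu, of "\<lambda>_. coin"] by simp
  show "(\<lambda>v. \<lambda>i\<in>{..<K}. \<not> v i) \<in> VM \<rightarrow>\<^sub>M VM"
    unfolding VM_def by (rule measurable_PiM_coin_Not)
  show "distr VM VM (\<lambda>v. \<lambda>i\<in>{..<K}. \<not> v i) = VM" unfolding VM_def by (rule distr_PiM_coin_Not) simp
  fix zt v u assume zt: "zt \<in> space ZM" and v: "v \<in> space VM" and u: "u \<in> space UM"
  show "sample_of K n (\<lambda>k\<in>zIdx K n. zt ((\<lambda>(i,b,j,c). (i, \<not> b, j, c)) k)) (\<lambda>i\<in>{..<K}. \<not> v i)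
      (\<lambda>k\<in>uIdx K n. u ((\<lambda>(i,b,j). (i, \<not> b, j)) k)) = sample_of K n zt v u"
    unfolding sample_of_def by (rule restrict_ext) (auto simp: sIdx_def zIdx_def uIdx_def)
qed (simp_all add: hf)

lemma expectation_swap_samples:
  fixes f1 f2 :: "_ \<Rightarrow> real"
  assumes f1: "f1 \<in> borel_measurable OM" and f1b: "\<And>x. x \<in> space OM \<Longrightarrow> \<bar>f1 x\<bar> \<le> C1"
    and f2: "f2 \<in> borel_measurable OM" and f2b: "\<And>x. x \<in> space OM \<Longrightarrow> \<bar>f2 x\<bar> \<le> C2"
    and hf: "\<And>mt zt v u w.
       f2 (mt,zt,v,u,w) = f1 (\<lambda>k\<in>clientIdx K. mt k, \<lambda>k\<in>zIdx K n. zt ((\<lambda>(i,b,j,c). (i, b, j, \<not> c)) k),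
          v, \<lambda>k\<in>uIdx K n. \<not> u k, w)"
  shows "expect f2 = expect f1"
proof (rule expectation_reindex[where pc = "\<lambda>k. k" and vT = "\<lambda>v. v", OF f1 f1b f2 f2b])
  show "bij_betw (\<lambda>k. k) (clientIdx K) (clientIdx K)" by (rule bij_betwI[where g="\<lambda>k. k"]) auto
  show "bij_betw (\<lambda>(i,b,j,c). (i, b, j, \<not> c)) (zIdx K n) (zIdx K n)"
    by (rule bij_betwI[where g = "\<lambda>(i,b,j,c). (i, b, j, \<not> c)"]) (auto simp: zIdx_def)
  show "(\<lambda>u. \<lambda>k\<in>uIdx K n. \<not> u k) \<in> UM \<rightarrow>\<^sub>M UM"
    unfolding UM_def by (rule measurable_PiM_coin_Not)
  show "distr UM UM (\<lambda>u. \<lambda>k\<in>uIdx K n. \<not> u k) = UM" unfolding UM_def by (rule distr_PiM_coin_Not) simp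
  fix zt v u assume zt: "zt \<in> space ZM" and v: "v \<in> space VM" and u: "u \<in> space UM"
  show "sample_of K n (\<lambda>k\<in>zIdx K n. zt ((\<lambda>(i,b,j,c). (i, b, j, \<not> c)) k)) v
      (\<lambda>k\<in>uIdx K n. \<not> u k) = sample_of K n zt v u"
    unfolding sample_of_def by (rule restrict_ext) (auto simp: sIdx_def zIdx_def uIdx_def)
qed (simp_all add: hf)


lemma B_nonneg: "0 \<le> B" using nonneg bnd order_trans by blast

lemma abs_loss_le: "\<bar>loss w z\<bar> \<le> B" using nonneg[of w z] bnd[of w z] by (simp add: abs_le_iff)

lemma measurable_risk[measurable (raw)]:
  assumes f[measurable]: "f \<in> N \<rightarrow>\<^sub>M D" and g[measurable]: "g \<in> N \<rightarrow>\<^sub>M Wm"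
  shows "(\<lambda>x. risk (mu (f x)) loss (g x)) \<in> borel_measurable N"
  unfolding risk_def
proof (rule borel_measurable_kernel_integral[where N=Zm])
  show "(\<lambda>x. mu (f x)) \<in> N \<rightarrow>\<^sub>M subprob_algebra Zm" by measurable
  have "(\<lambda>p. loss (g (fst p)) (snd p)) \<in> borel_measurable (N \<Otimes>\<^sub>M Zm)" by measurable
  then show "(\<lambda>(x, y). loss (g x) y) \<in> borel_measurable (N \<Otimes>\<^sub>M Zm)" by (simp add: case_prod_unfold)
qed

lemma measurable_pop_risk[measurable (raw)]:
  assumes g: "g \<in> N \<rightarrow>\<^sub>M Wm"
  shows "(\<lambda>x. pop_risk D mu loss (g x)) \<in> borel_measurable N"
  unfolding pop_risk_def
proof (rule borel_measurable_kernel_integral[where N=D])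
  show "(\<lambda>x. D) \<in> N \<rightarrow>\<^sub>M subprob_algebra D" by (rule const_subprob_kernels(4))
  have "(\<lambda>p. risk (mu (snd p)) loss (g (fst p))) \<in> borel_measurable (N \<Otimes>\<^sub>M D)"
    by (rule measurable_risk[OF measurable_snd measurable_compose[OF measurable_fst g]])
  then show "(\<lambda>(x, y). risk (mu y) loss (g x)) \<in> borel_measurable (N \<Otimes>\<^sub>M D)" by (simp add: case_prod_unfold)
qed

lemma abs_risk_le: "c \<in> space D \<Longrightarrow> w \<in> space Wm \<Longrightarrow> \<bar>risk (mu c) loss w\<bar> \<le> B"
  unfolding risk_def
proof (rule abs_integral_bounded_prob[OF prob_space_mu])
  assume c: "c \<in> space D" and w[measurable]: "w \<in> space Wm"
  show "(\<lambda>z. loss w z) \<in> borel_measurable (mu c)"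
    unfolding measurable_cong_sets[OF sets_mu[OF c] refl] by measurable
qed (auto simp: abs_loss_le)

lemma abs_pop_risk_le: "w \<in> space Wm \<Longrightarrow> \<bar>pop_risk D mu loss w\<bar> \<le> B"
  unfolding pop_risk_def
proof (rule abs_integral_bounded_prob[OF D])
  assume w[measurable]: "w \<in> space Wm"
  show "(\<lambda>c. risk (mu c) loss w) \<in> borel_measurable D" by measurable
  show "\<bar>risk (mu c) loss w\<bar> \<le> B" if "c \<in> space D" for c by (rule abs_risk_le[OF that w])
qed

lemma expectation_eq_given_VU:
  fixes f1 f2 :: "_ \<Rightarrow> real"
  assumes f1: "f1 \<in> borel_measurable OM" and f1b: "\<And>x. x \<in> space OM \<Longrightarrow> \<bar>f1 x\<bar> \<le> C1"
    and f2: "f2 \<in> borel_measurable OM" and f2b: "\<And>x. x \<in> space OM \<Longrightarrow> \<bar>f2 x\<bar> \<le> C2"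
    and h: "\<And>v u. v \<in> space VM \<Longrightarrow> u \<in> space UM \<Longrightarrow>
      (\<integral>mt. \<integral>zt. integral_W f1 mt zt v u \<partial>supersampleM mt \<partial>clientsM) = (\<integral>mt. \<integral>zt. integral_W f2 mt zt v u \<partial>supersampleM mt \<partial>clientsM)"
  shows "expect f1 = expect f2"
proof -
  have "expect f1 = iter_integral (integral_W f1)" by (rule expectation_iter_integral[OF f1 f1b])
  also have "\<dots> = (\<integral>v. \<integral>u. \<integral>mt. \<integral>zt. integral_W f1 mt zt v u \<partial>supersampleM mt \<partial>clientsM \<partial>UM \<partial>VM)"
    by (rule iter_integral_VU_outer[OF measurable_integral_W[OF f1] abs_integral_W_le[OF f1 f1b]])
  also have "\<dots> = (\<integral>v. \<integral>u. \<integral>mt. \<integral>zt. integral_W f2 mt zt v u \<partial>supersampleM mt \<partial>clientsM \<partial>UM \<partial>VM)"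
    by (intro Bochner_Integration.integral_cong[OF refl] h)
  also have "\<dots> = iter_integral (integral_W f2)"
    by (rule iter_integral_VU_outer[OF measurable_integral_W[OF f2] abs_integral_W_le[OF f2 f2b], symmetric])
  also have "\<dots> = expect f2" by (rule expectation_iter_integral[OF f2 f2b, symmetric])
  finally show ?thesis .
qed

lemma abs_integral_A_le:
  fixes h :: "'w \<Rightarrow> real"
  assumes zt: "zt \<in> space ZM" and v: "v \<in> space VM" and u: "u \<in> space UM"
    and h: "h \<in> borel_measurable Wm" and hb: "\<And>w. w \<in> space Wm \<Longrightarrow> \<bar>h w\<bar> \<le> C"
  shows "\<bar>\<integral>w. h w \<partial>A (sample_of K n zt v u)\<bar> \<le> C"
proof -
  have sS: "sample_of K n zt v u \<in> space SM" using sample_of_in_space[OF zt v u] .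
  show ?thesis
  proof (rule abs_integral_bounded_prob[OF prob_space_A[OF sS]])
    show "h \<in> borel_measurable (A (sample_of K n zt v u))"
      unfolding measurable_cong_sets[OF sets_A[OF sS] refl] by (rule h)
  qed (use hb sets_eq_imp_space_eq[OF sets_A[OF sS]] in auto)
qed

text \<open>A supersample point that is not in the training sample is a fresh draw from its
  superclient's distribution, independent of W.\<close>
lemma integral_unread_point:
  assumes v[measurable]: "v \<in> space VM" and u[measurable]: "u \<in> space UM" and k: "k \<in> zIdx K n"
    and unread: "\<And>i j. i < K \<Longrightarrow> j < n \<Longrightarrow> k \<noteq> (i, v i, j, u (i, v i, j))"
    and mt: "mt \<in> space clientsM"
  shows "(\<integral>zt. \<integral>w. loss w (zt k) \<partial>A (sample_of K n zt v u) \<partial>supersampleM mt) =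
    (\<integral>zt. \<integral>w. risk (mu (mt (fst k, fst (snd k)))) loss w \<partial>A (sample_of K n zt v u) \<partial>supersampleM mt)"
proof -
  define M where "M = (\<lambda>(i::nat,b::bool,j::nat,c::bool). mu (mt (i,b)))"
  have QM: "supersampleM mt = PiM (zIdx K n) M" unfolding supersampleM_def M_def ..
  have Mk: "M k = mu (mt (fst k, fst (snd k)))" unfolding M_def by (cases k) auto
  have ck: "mt (fst k, fst (snd k)) \<in> space D" using k by (intro client_in_space[OF mt]) (auto simp: zIdx_def)
  have Mk_sets: "sets (M k) = sets Zm" unfolding Mk by (rule sets_mu[OF ck])
  define g where "g zt y = (\<integral>w. loss w y \<partial>A (sample_of K n zt v u))" for zt y
  have sets_eq: "sets (PiM (zIdx K n) M \<Otimes>\<^sub>M M k) = sets (ZM \<Otimes>\<^sub>M Zm)"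
    unfolding QM[symmetric] by (rule sets_pair_measure_cong[OF sets_supersampleM[OF mt] Mk_sets])
  have "(\<integral>x. g x (x k) \<partial>PiM (zIdx K n) M) = (\<integral>x. \<integral>y. g x y \<partial>M k \<partial>PiM (zIdx K n) M)"
  proof (rule integral_PiM_resample[OF finite_index_sets(2) k])
    show "prob_space (M i)" if "i \<in> zIdx K n" for i
      using that by (auto simp: M_def zIdx_def intro!: prob_space_mu client_in_space[OF mt])
    show "(\<lambda>(x,y). g x y) \<in> borel_measurable (PiM (zIdx K n) M \<Otimes>\<^sub>M M k)"
      unfolding measurable_cong_sets[OF sets_eq refl] g_def by measurable
    show "\<bar>g x y\<bar> \<le> B" if "x \<in> space (PiM (zIdx K n) M)" "y \<in> space (M k)" for x y
      unfolding g_def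
    proof (rule abs_integral_A_le[OF _ v u])
      show "x \<in> space ZM" using that(1) space_supersampleM[OF mt] QM by simp
      have [measurable]: "y \<in> space Zm" using that(2) sets_eq_imp_space_eq[OF Mk_sets] by simp
      show "(\<lambda>w. loss w y) \<in> borel_measurable Wm" by measurable
    qed (rule abs_loss_le)
    fix x :: "nat \<times> bool \<times> nat \<times> bool \<Rightarrow> 'z" and y y' :: 'z
    have "sample_of K n (x(k := y')) v u = sample_of K n x v u"
      unfolding sample_of_def by (rule restrict_ext) (auto simp: sIdx_def dest: unread)
    then show "g (x(k := y')) y = g x y" unfolding g_def by simp
  qed
  moreover have "(\<integral>y. g x y \<partial>M k) = (\<integral>w. risk (mu (mt (fst k, fst (snd k)))) loss w \<partial>A (sample_of K n x v u))"
    if "x \<in> space (supersampleM mt)" for x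
  proof -
    have x: "x \<in> space ZM" using that space_supersampleM[OF mt] by simp
    have sS: "sample_of K n x v u \<in> space SM" using sample_of_in_space[OF x v u] .
    have "(\<integral>y. g x y \<partial>M k) = (\<integral>w. \<integral>y. loss w y \<partial>M k \<partial>A (sample_of K n x v u))"
      unfolding g_def
    proof (rule Fubini_bounded_prob[OF _ prob_space_A[OF sS]])
      show "prob_space (M k)" unfolding Mk by (rule prob_space_mu[OF ck])
      show "(\<lambda>(y, w). loss w y) \<in> borel_measurable (M k \<Otimes>\<^sub>M A (sample_of K n x v u))"
        unfolding measurable_cong_sets[OF sets_pair_measure_cong[OF Mk_sets sets_A[OF sS]] refl]
        by measurable
    qed (rule abs_loss_le)
    then show ?thesis unfolding risk_def Mk .
  qed
  ultimately show ?thesis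
    unfolding QM g_def by (simp cong: Bochner_Integration.integral_cong add: QM[symmetric])
qed

text \<open>The training sample never reads the data of an unselected superclient, so its
  distribution can be redrawn from D.\<close>
lemma integral_supersampleM_update_unseen:
  fixes h :: "(nat \<times> nat \<Rightarrow> 'z) \<Rightarrow> real"
  assumes v: "v \<in> space VM" and u: "u \<in> space UM" and k0: "k0 \<in> clientIdx K"
    and unseen: "\<And>a. a < K \<Longrightarrow> k0 \<noteq> (a, v a)"
    and mt: "mt \<in> space clientsM" and c: "c \<in> space D"
    and h[measurable]: "h \<in> borel_measurable SM"
  shows "(\<integral>zt. h (sample_of K n zt v u) \<partial>supersampleM (mt(k0 := c)))
    = (\<integral>zt. h (sample_of K n zt v u) \<partial>supersampleM mt)"
proof -
  define J where "J = {k \<in> zIdx K n. (fst k, fst (snd k)) \<noteq> k0}"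
  define M where "M mt = (\<lambda>(i::nat,b::bool,j::nat,c::bool). mu (mt (i,b)))" for mt :: "nat \<times> bool \<Rightarrow> 'c"
  have read_J: "(a, v a, j, u (a, v a, j)) \<in> J" if "a < K" "j < n" for a j
    using that unseen by (auto simp: J_def zIdx_def)
  have [measurable]: "(\<lambda>y. sample_of K n y v u) \<in> PiM J (\<lambda>_. Zm) \<rightarrow>\<^sub>M SM"
    unfolding sample_of_def SM_def
  proof (rule measurable_restrict)
    fix p assume "p \<in> sIdx K n"
    then obtain a j where p: "p = (a, j)" and a: "a < K" and j: "j < n" by (auto simp: sIdx_def)
    show "(\<lambda>y. (\<lambda>(i, j). y (i, v i, j, u (i, v i, j))) p) \<in> PiM J (\<lambda>_. Zm) \<rightarrow>\<^sub>M Zm"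
      unfolding p using measurable_component_singleton[OF read_J[OF a j], of "\<lambda>_. Zm"] by simp
  qed
  have restrict_to_J: "(\<integral>zt. h (sample_of K n zt v u) \<partial>supersampleM mt')
      = (\<integral>zt. h (sample_of K n zt v u) \<partial>PiM J (M mt'))" if mt': "mt' \<in> space clientsM" for mt'
    unfolding supersampleM_def M_def[symmetric]
  proof (rule integral_PiM_restrict_prob[OF finite_index_sets(2)])
    show "J \<subseteq> zIdx K n" unfolding J_def by auto
    show "prob_space (M mt' k)" if "k \<in> zIdx K n" for k
      using that by (auto simp: M_def zIdx_def intro!: prob_space_mu client_in_space[OF mt'])
    have sets_J: "sets (PiM J (M mt')) = sets (PiM J (\<lambda>_. Zm))"
      by (rule sets_PiM_cong) (auto simp: J_def M_def zIdx_def intro!: sets_mu client_in_space[OF mt'])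
    show "(\<lambda>zt. h (sample_of K n zt v u)) \<in> borel_measurable (PiM J (M mt'))"
      unfolding measurable_cong_sets[OF sets_J refl] by measurable
    have "sample_of K n (restrict x J) v u = sample_of K n x v u"
      for x :: "nat \<times> bool \<times> nat \<times> bool \<Rightarrow> 'z"
      unfolding sample_of_def by (rule restrict_ext) (auto simp: sIdx_def read_J)
    then show "h (sample_of K n (restrict x J) v u) = h (sample_of K n x v u)" for x by simp
  qed
  have mt': "mt(k0 := c) \<in> space clientsM"
    using mt c k0 by (auto simp: clientsM_def space_PiM PiE_iff extensional_def)
  have "PiM J (M (mt(k0 := c))) = PiM J (M mt)"
    by (rule PiM_cong) (auto simp: J_def M_def)
  then show ?thesis using restrict_to_J[OF mt] restrict_to_J[OF mt'] by simp
qed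

lemma integral_unseen_client:
  assumes v[measurable]: "v \<in> space VM" and u[measurable]: "u \<in> space UM" and k0: "k0 \<in> clientIdx K"
    and unseen: "\<And>a. a < K \<Longrightarrow> k0 \<noteq> (a, v a)"
  shows "(\<integral>mt. \<integral>zt. \<integral>w. risk (mu (mt k0)) loss w \<partial>A (sample_of K n zt v u) \<partial>supersampleM mt \<partial>clientsM) =
    (\<integral>mt. \<integral>zt. \<integral>w. pop_risk D mu loss w \<partial>A (sample_of K n zt v u) \<partial>supersampleM mt \<partial>clientsM)"
proof -
  define H where "H c zt = (\<integral>w. risk (mu c) loss w \<partial>A (sample_of K n zt v u))" for c zt
  define g where "g mt c = (\<integral>zt. H c zt \<partial>supersampleM mt)" for mt c
  have H_le: "\<bar>H c zt\<bar> \<le> B" if c[measurable]: "c \<in> space D" and zt: "zt \<in> space ZM" for c zt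
    unfolding H_def by (rule abs_integral_A_le[OF zt v u]) (auto intro: abs_risk_le[OF c])
  have "(\<integral>mt. g mt (mt k0) \<partial>clientsM) = (\<integral>mt. \<integral>c. g mt c \<partial>D \<partial>clientsM)"
    unfolding clientsM_def
  proof (rule integral_PiM_resample[OF finite_index_sets(1) k0 D])
    show "(\<lambda>(x, y). g x y) \<in> borel_measurable (PiM (clientIdx K) (\<lambda>_. D) \<Otimes>\<^sub>M D)"
      unfolding g_def H_def clientsM_def[symmetric] by measurable
    show "\<bar>g x y\<bar> \<le> B" if x: "x \<in> space (PiM (clientIdx K) (\<lambda>_. D))" and y: "y \<in> space D" for x y
      unfolding g_def clientsM_def[symmetric]
    proof (rule abs_integral_bounded_prob[OF prob_space_supersampleM])
      show x': "x \<in> space clientsM" using x by (simp add: clientsM_def)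
      show "H y \<in> borel_measurable (supersampleM x)"
        unfolding measurable_cong_sets[OF sets_supersampleM[OF x'] refl] H_def using y by measurable
    qed (use H_le[OF y] space_supersampleM x in \<open>auto simp: clientsM_def\<close>)
    show "g (x(k0 := y')) y = g x y"
      if "x \<in> space (PiM (clientIdx K) (\<lambda>_. D))" "y \<in> space D" "y' \<in> space D" for x y y'
      unfolding g_def H_def using that
      by (intro integral_supersampleM_update_unseen[OF v u k0 unseen]) (auto simp: clientsM_def)
  qed
  moreover have "(\<integral>c. g mt c \<partial>D) = (\<integral>zt. \<integral>w. pop_risk D mu loss w \<partial>A (sample_of K n zt v u) \<partial>supersampleM mt)"
    if mt[measurable]: "mt \<in> space clientsM" for mt
  proof -
    have "(\<integral>c. g mt c \<partial>D) = (\<integral>zt. \<integral>c. H c zt \<partial>D \<partial>supersampleM mt)"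
      unfolding g_def
    proof (rule Fubini_bounded_prob[OF D prob_space_supersampleM[OF mt]])
      show "(\<lambda>(c, zt). H c zt) \<in> borel_measurable (D \<Otimes>\<^sub>M supersampleM mt)"
        unfolding measurable_cong_sets[OF sets_pair_measure_cong[OF refl sets_supersampleM[OF mt]] refl] H_def
        by measurable
    qed (use H_le space_supersampleM[OF mt] in auto)
    also have "\<dots> = (\<integral>zt. \<integral>w. pop_risk D mu loss w \<partial>A (sample_of K n zt v u) \<partial>supersampleM mt)"
    proof (rule Bochner_Integration.integral_cong[OF refl])
      fix zt assume "zt \<in> space (supersampleM mt)"
      then have zt: "zt \<in> space ZM" using space_supersampleM[OF mt] by simp
      have sS: "sample_of K n zt v u \<in> space SM" using sample_of_in_space[OF zt v u] .
      show "(\<integral>c. H c zt \<partial>D) = (\<integral>w. pop_risk D mu loss w \<partial>A (sample_of K n zt v u))"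
        unfolding H_def pop_risk_def
      proof (rule Fubini_bounded_prob[OF D prob_space_A[OF sS]])
        show "(\<lambda>(c, w). risk (mu c) loss w) \<in> borel_measurable (D \<Otimes>\<^sub>M A (sample_of K n zt v u))"
          unfolding measurable_cong_sets[OF sets_pair_measure_cong[OF refl sets_A[OF sS]] refl]
          by measurable
      qed (use sets_eq_imp_space_eq[OF sets_A[OF sS]] in \<open>auto intro: abs_risk_le\<close>)
    qed
    finally show ?thesis .
  qed
  ultimately show ?thesis
    unfolding g_def H_def by (simp cong: Bochner_Integration.integral_cong)
qed

lemma integrable_fl_joint:
  fixes f :: "_ \<Rightarrow> real"
  assumes f: "f \<in> borel_measurable OM" and fb: "\<And>x. x \<in> space OM \<Longrightarrow> \<bar>f x\<bar> \<le> C"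
  shows "integrable (fl_joint D mu Zm Wm A K n) f"
  unfolding fl_joint_eq_bind
  by (rule integrable_bind_prob[OF f fb measurable_client_kernel prob_space_clientsM])

lemma sets_fl_joint: "sets (fl_joint D mu Zm Wm A K n) = sets OM"
  unfolding fl_joint_eq_bind
  by (rule sets_bind[OF sets_kernel[OF measurable_client_kernel]])
    (simp_all add: prob_space.not_empty[OF prob_space_clientsM])

lemma space_OM: "(mt, zt, v, u, w) \<in> space OM \<longleftrightarrow>
    mt \<in> space clientsM \<and> zt \<in> space ZM \<and> v \<in> space VM \<and> u \<in> space UM \<and> w \<in> space Wm"
  by (simp add: OM_eq space_pair_measure)

lemma abs_of_bool_mult_le: "\<bar>x\<bar> \<le> B \<Longrightarrow> \<bar>of_bool b * x\<bar> \<le> B" for x :: real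
  by (cases b) (simp_all add: B_nonneg)

lemma expectation_unread_point:
  fixes b cb cc :: "(nat \<Rightarrow> bool) \<Rightarrow> (nat \<times> bool \<times> nat \<Rightarrow> bool) \<Rightarrow> bool"
  assumes ci: "ci < K" and j: "j < n"
    and m1: "(\<lambda>(mt,zt,v,u,w). of_bool (b v u) * loss w (zt (ci, cb v u, j, cc v u))) \<in> borel_measurable OM"
    and m2: "(\<lambda>(mt,zt,v,u,w). of_bool (b v u) * risk (mu (mt (ci, cb v u))) loss w) \<in> borel_measurable OM"
    and unread: "\<And>v u. b v u \<Longrightarrow> (cb v u, cc v u) \<noteq> (v ci, u (ci, v ci, j))"
  shows "expect (\<lambda>(mt,zt,v,u,w). of_bool (b v u) * loss w (zt (ci, cb v u, j, cc v u)))
    = expect (\<lambda>(mt,zt,v,u,w). of_bool (b v u) * risk (mu (mt (ci, cb v u))) loss w)"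
proof (rule expectation_eq_given_VU[OF m1 _ m2])
  show "\<bar>(\<lambda>(mt,zt,v,u,w). of_bool (b v u) * loss w (zt (ci, cb v u, j, cc v u))) x\<bar> \<le> B" for x
    by (auto split: prod.splits simp: B_nonneg intro!: abs_of_bool_mult_le abs_loss_le)
  show "\<bar>(\<lambda>(mt,zt,v,u,w). of_bool (b v u) * risk (mu (mt (ci, cb v u))) loss w) x\<bar> \<le> B"
    if "x \<in> space OM" for x
    using that ci by (auto split: prod.splits simp: space_OM B_nonneg
        intro!: abs_of_bool_mult_le abs_risk_le client_in_space)
  fix v u assume v: "v \<in> space VM" and u: "u \<in> space UM"
  show "(\<integral>mt. \<integral>zt. integral_W (\<lambda>(mt,zt,v,u,w). of_bool (b v u) * loss w (zt (ci, cb v u, j, cc v u)))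
      mt zt v u \<partial>supersampleM mt \<partial>clientsM)
    = (\<integral>mt. \<integral>zt. integral_W (\<lambda>(mt,zt,v,u,w). of_bool (b v u) * risk (mu (mt (ci, cb v u))) loss w)
      mt zt v u \<partial>supersampleM mt \<partial>clientsM)"
  proof (cases "b v u")
    case True
    have k: "(ci, cb v u, j, cc v u) \<in> zIdx K n" using ci j by (simp add: zIdx_def)
    have unr: "(ci, cb v u, j, cc v u) \<noteq> (a, v a, j', u (a, v a, j'))" for a j'
      using unread[OF True] by auto
    show ?thesis
    proof (rule Bochner_Integration.integral_cong[OF refl])
      fix mt assume "mt \<in> space clientsM"
      from integral_unread_point[OF v u k unr this] True
      show "(\<integral>zt. integral_W (\<lambda>(mt,zt,v,u,w). of_bool (b v u) * loss w (zt (ci, cb v u, j, cc v u)))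
          mt zt v u \<partial>supersampleM mt)
        = (\<integral>zt. integral_W (\<lambda>(mt,zt,v,u,w). of_bool (b v u) * risk (mu (mt (ci, cb v u))) loss w)
          mt zt v u \<partial>supersampleM mt)"
        by (simp add: integral_W_def)
    qed
  qed (simp add: integral_W_def)
qed

lemma expectation_unseen_client:
  fixes b cb :: "(nat \<Rightarrow> bool) \<Rightarrow> (nat \<times> bool \<times> nat \<Rightarrow> bool) \<Rightarrow> bool"
  assumes ci: "ci < K"
    and m1: "(\<lambda>(mt,zt,v,u,w). of_bool (b v u) * risk (mu (mt (ci, cb v u))) loss w) \<in> borel_measurable OM"
    and m2: "(\<lambda>(mt,zt,v,u,w). of_bool (b v u) * pop_risk D mu loss w) \<in> borel_measurable OM"
    and unseen: "\<And>v u. b v u \<Longrightarrow> cb v u \<noteq> v ci"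
  shows "expect (\<lambda>(mt,zt,v,u,w). of_bool (b v u) * risk (mu (mt (ci, cb v u))) loss w)
    = expect (\<lambda>(mt,zt,v,u,w). of_bool (b v u) * pop_risk D mu loss w)"
proof (rule expectation_eq_given_VU[OF m1 _ m2])
  show "\<bar>(\<lambda>(mt,zt,v,u,w). of_bool (b v u) * risk (mu (mt (ci, cb v u))) loss w) x\<bar> \<le> B"
    if "x \<in> space OM" for x
    using that ci by (auto split: prod.splits simp: space_OM B_nonneg
        intro!: abs_of_bool_mult_le abs_risk_le client_in_space)
  show "\<bar>(\<lambda>(mt,zt,v,u,w). of_bool (b v u) * pop_risk D mu loss w) x\<bar> \<le> B" if "x \<in> space OM" for x
    using that by (auto split: prod.splits simp: space_OM B_nonneg
        intro!: abs_of_bool_mult_le abs_pop_risk_le)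
  fix v u assume v: "v \<in> space VM" and u: "u \<in> space UM"
  show "(\<integral>mt. \<integral>zt. integral_W (\<lambda>(mt,zt,v,u,w). of_bool (b v u) * risk (mu (mt (ci, cb v u))) loss w)
      mt zt v u \<partial>supersampleM mt \<partial>clientsM)
    = (\<integral>mt. \<integral>zt. integral_W (\<lambda>(mt,zt,v,u,w). of_bool (b v u) * pop_risk D mu loss w)
      mt zt v u \<partial>supersampleM mt \<partial>clientsM)"
  proof (cases "b v u")
    case True
    have k0: "(ci, cb v u) \<in> clientIdx K" using ci by (simp add: clientIdx_def)
    have "(ci, cb v u) \<noteq> (a, v a)" for a using unseen[OF True] by auto
    from integral_unseen_client[OF v u k0 this] show ?thesis
      using True by (simp add: integral_W_def)
  qed (simp add: integral_W_def)
qed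

lemma integrable_client_risk:
  assumes i: "i < K"
  shows "integrable (fl_joint D mu Zm Wm A K n) (\<lambda>(mt,zt,v,u,w). risk (mu (mt (i, v i))) loss w)"
proof (rule integrable_fl_joint[where C = B])
  note [measurable (raw)] = measurable_V_component[OF _ i] measurable_clientsM_select[OF _ _ i]
  show "(\<lambda>(mt,zt,v,u,w). risk (mu (mt (i, v i))) loss w) \<in> borel_measurable OM"
    unfolding OM_eq by measurable
qed (auto split: prod.splits simp: space_OM intro!: abs_risk_le client_in_space i)

lemma integrable_sample_loss:
  assumes i: "i < K" and j: "j < n"
  shows "integrable (fl_joint D mu Zm Wm A K n) (\<lambda>(mt,zt,v,u,w). loss w (zt (i, v i, j, u (i, v i, j))))"
proof (rule integrable_fl_joint[where C = B])
  note [measurable (raw)] = measurable_V_component[OF _ i] measurable_U_component[OF _ _ i j]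
    measurable_ZM_select[OF _ _ _ i j]
  show "(\<lambda>(mt,zt,v,u,w). loss w (zt (i, v i, j, u (i, v i, j)))) \<in> borel_measurable OM"
    unfolding OM_eq by measurable
qed (auto split: prod.splits intro: abs_loss_le)

lemma client_gap_term:
  assumes i: "i < K" and C: "C + 2 \<noteq> 0"
  shows "(2 + C) * expect (\<lambda>(mt,zt,v,u,w).
      ((-1::real) ^ (1 - of_bool (v i)) - C / (C + 2)) * loss w (zt (i, False, 0, \<not> u (i, False, 0))))
    = expect (\<lambda>(mt,zt,v,u,w). pop_risk D mu loss w)
      - (1 + C) * expect (\<lambda>(mt,zt,v,u,w). risk (mu (mt (i, v i))) loss w)"
proof -
  note [measurable (raw)] = measurable_V_component[OF _ i] measurable_U_component[OF _ _ i npos]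
    measurable_ZM_select[OF _ _ _ i npos] measurable_clientsM_select[OF _ _ i]
  have m: "(\<lambda>(mt,zt,v,u,w). loss w (zt (i, False, 0, \<not> u (i, False, 0)))) \<in> borel_measurable OM"
    "(\<lambda>(mt,zt,v,u,w). pop_risk D mu loss w) \<in> borel_measurable OM"
    "(\<lambda>(mt,zt,v,u,w). of_bool (v i) * loss w (zt (i, False, 0, \<not> u (i, False, 0)))) \<in> borel_measurable OM"
    "(\<lambda>(mt,zt,v,u,w). of_bool (\<not> v i) * loss w (zt (i, False, 0, \<not> u (i, False, 0)))) \<in> borel_measurable OM"
    "(\<lambda>(mt,zt,v,u,w). of_bool (v i) * risk (mu (mt (i, False))) loss w) \<in> borel_measurable OM"
    "(\<lambda>(mt,zt,v,u,w). of_bool (\<not> v i) * risk (mu (mt (i, False))) loss w) \<in> borel_measurable OM"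
    "(\<lambda>(mt,zt,v,u,w). of_bool (v i) * pop_risk D mu loss w) \<in> borel_measurable OM"
    "(\<lambda>(mt,zt,v,u,w). of_bool (\<not> v i) * pop_risk D mu loss w) \<in> borel_measurable OM"
    "(\<lambda>(mt,zt,v,u,w). of_bool (v i) * risk (mu (mt (i, v i))) loss w) \<in> borel_measurable OM"
    "(\<lambda>(mt,zt,v,u,w). of_bool (\<not> v i) * risk (mu (mt (i, v i))) loss w) \<in> borel_measurable OM"
    unfolding OM_eq by measurable
  have pop_le: "\<bar>(\<lambda>(mt,zt,v,u,w). of_bool (P v) * pop_risk D mu loss w) x\<bar> \<le> B"
    if "x \<in> space OM" for x P
    using that by (auto split: prod.splits simp: space_OM B_nonneg intro!: abs_of_bool_mult_le abs_pop_risk_le)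
  have risk_le: "\<bar>(\<lambda>(mt,zt,v,u,w). of_bool (P v) * risk (mu (mt (i, v i))) loss w) x\<bar> \<le> B"
    if "x \<in> space OM" for x P
    using that i by (auto split: prod.splits simp: space_OM B_nonneg
        intro!: abs_of_bool_mult_le abs_risk_le client_in_space)
  have X: "integrable (fl_joint D mu Zm Wm A K n)
      (\<lambda>(mt,zt,v,u,w). loss w (zt (i, False, 0, \<not> u (i, False, 0))))"
    by (rule integrable_fl_joint[where C = B, OF m(1)]) (auto split: prod.splits intro: abs_loss_le)
  have Y: "integrable (fl_joint D mu Zm Wm A K n) (\<lambda>(mt,zt,v,u,w). pop_risk D mu loss w)"
    by (rule integrable_fl_joint[where C = B, OF m(2)]) (auto split: prod.splits simp: space_OM intro: abs_pop_risk_le)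
  have b: "Measurable.pred (fl_joint D mu Zm Wm A K n) (\<lambda>(mt,zt,v,u,w). v i)"
    unfolding measurable_cong_sets[OF sets_fl_joint refl] OM_eq by measurable
  \<comment> \<open>If V_i holds, superclient (i, False) is unselected; otherwise it is client i and the
    point is its unused one.\<close>
  have X_on: "expect (\<lambda>(mt,zt,v,u,w). of_bool (v i) * loss w (zt (i, False, 0, \<not> u (i, False, 0))))
      = expect (\<lambda>(mt,zt,v,u,w). of_bool (v i) * pop_risk D mu loss w)"
  proof -
    have "expect (\<lambda>(mt,zt,v,u,w). of_bool (v i) * loss w (zt (i, False, 0, \<not> u (i, False, 0))))
        = expect (\<lambda>(mt,zt,v,u,w). of_bool (v i) * risk (mu (mt (i, False))) loss w)"
      by (rule expectation_unread_point[OF i npos m(3) m(5)]) auto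
    also have "\<dots> = expect (\<lambda>(mt,zt,v,u,w). of_bool (v i) * pop_risk D mu loss w)"
      by (rule expectation_unseen_client[OF i m(5) m(7)]) auto
    finally show ?thesis .
  qed
  have X_off: "expect (\<lambda>(mt,zt,v,u,w). of_bool (\<not> v i) * loss w (zt (i, False, 0, \<not> u (i, False, 0))))
      = expect (\<lambda>(mt,zt,v,u,w). of_bool (\<not> v i) * risk (mu (mt (i, v i))) loss w)"
  proof -
    have "expect (\<lambda>(mt,zt,v,u,w). of_bool (\<not> v i) * loss w (zt (i, False, 0, \<not> u (i, False, 0))))
        = expect (\<lambda>(mt,zt,v,u,w). of_bool (\<not> v i) * risk (mu (mt (i, False))) loss w)"
      by (rule expectation_unread_point[OF i npos m(4) m(6)]) auto
    also have "(\<lambda>(mt,zt,v,u,w). of_bool (\<not> v i) * risk (mu (mt (i, False))) loss w)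
        = (\<lambda>(mt,zt,v,u,w). of_bool (\<not> v i) * risk (mu (mt (i, v i))) loss w)"
      by (auto simp: fun_eq_iff)
    finally show ?thesis .
  qed
  have Y_sym: "expect (\<lambda>(mt,zt,v,u,w). of_bool (v i) * pop_risk D mu loss w)
      = expect (\<lambda>(mt,zt,v,u,w). of_bool (\<not> v i) * pop_risk D mu loss w)"
    by (rule expectation_swap_superclients[OF m(8) pop_le m(7) pop_le]) (auto simp: i)
  have Z_sym: "expect (\<lambda>(mt,zt,v,u,w). of_bool (v i) * risk (mu (mt (i, v i))) loss w)
      = expect (\<lambda>(mt,zt,v,u,w). of_bool (\<not> v i) * risk (mu (mt (i, v i))) loss w)"
    by (rule expectation_swap_superclients[OF m(10) risk_le m(9) risk_le]) (auto simp: i clientIdx_def)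
  from shifted_rademacher_identity[OF X[unfolded case_prod_unfold] Y[unfolded case_prod_unfold]
      integrable_client_risk[OF i, unfolded case_prod_unfold] b[unfolded case_prod_unfold] X_on[unfolded case_prod_unfold]
      X_off[unfolded case_prod_unfold] Y_sym[unfolded case_prod_unfold] Z_sym[unfolded case_prod_unfold] C]
  show ?thesis by (simp add: case_prod_unfold)
qed

lemma sample_gap_term:
  assumes i: "i < K" and j: "j < n" and C: "C + 2 \<noteq> 0"
  shows "(2 + C) * expect (\<lambda>(mt,zt,v,u,w).
      ((-1::real) ^ (1 - of_bool (u (i, v i, j))) - C / (C + 2)) * loss w (zt (i, v i, j, False)))
    = expect (\<lambda>(mt,zt,v,u,w). risk (mu (mt (i, v i))) loss w)
      - (1 + C) * expect (\<lambda>(mt,zt,v,u,w). loss w (zt (i, v i, j, u (i, v i, j))))"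
proof -
  note [measurable (raw)] = measurable_V_component[OF _ i] measurable_U_component[OF _ _ i j]
    measurable_ZM_select[OF _ _ _ i j] measurable_clientsM_select[OF _ _ i]
  have m: "(\<lambda>(mt,zt,v,u,w). loss w (zt (i, v i, j, False))) \<in> borel_measurable OM"
    "(\<lambda>(mt,zt,v,u,w). of_bool (u (i, v i, j)) * loss w (zt (i, v i, j, False))) \<in> borel_measurable OM"
    "(\<lambda>(mt,zt,v,u,w). of_bool (u (i, v i, j)) * risk (mu (mt (i, v i))) loss w) \<in> borel_measurable OM"
    "(\<lambda>(mt,zt,v,u,w). of_bool (\<not> u (i, v i, j)) * risk (mu (mt (i, v i))) loss w) \<in> borel_measurable OM"
    "(\<lambda>(mt,zt,v,u,w). of_bool (u (i, v i, j)) * loss w (zt (i, v i, j, u (i, v i, j))))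
      \<in> borel_measurable OM"
    "(\<lambda>(mt,zt,v,u,w). of_bool (\<not> u (i, v i, j)) * loss w (zt (i, v i, j, u (i, v i, j))))
      \<in> borel_measurable OM"
    unfolding OM_eq by measurable
  have loss_le: "\<bar>(\<lambda>(mt,zt,v,u,w). of_bool (P v u) * loss w (zt (Q v u))) x\<bar> \<le> B" for x P Q
    by (auto split: prod.splits simp: B_nonneg intro!: abs_of_bool_mult_le abs_loss_le)
  have risk_le: "\<bar>(\<lambda>(mt,zt,v,u,w). of_bool (P v u) * risk (mu (mt (i, v i))) loss w) x\<bar> \<le> B"
    if "x \<in> space OM" for x P
    using that i by (auto split: prod.splits simp: space_OM B_nonneg
        intro!: abs_of_bool_mult_le abs_risk_le client_in_space)
  have X: "integrable (fl_joint D mu Zm Wm A K n) (\<lambda>(mt,zt,v,u,w). loss w (zt (i, v i, j, False)))"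
    by (rule integrable_fl_joint[where C = B, OF m(1)]) (auto split: prod.splits intro: abs_loss_le)
  have b: "Measurable.pred (fl_joint D mu Zm Wm A K n) (\<lambda>(mt,zt,v,u,w). u (i, v i, j))"
    unfolding measurable_cong_sets[OF sets_fl_joint refl] OM_eq by measurable
  have X_on: "expect (\<lambda>(mt,zt,v,u,w). of_bool (u (i, v i, j)) * loss w (zt (i, v i, j, False)))
      = expect (\<lambda>(mt,zt,v,u,w). of_bool (u (i, v i, j)) * risk (mu (mt (i, v i))) loss w)"
    by (rule expectation_unread_point[OF i j m(2) m(3)]) auto
  have X_off: "expect (\<lambda>(mt,zt,v,u,w). of_bool (\<not> u (i, v i, j)) * loss w (zt (i, v i, j, False)))
      = expect (\<lambda>(mt,zt,v,u,w). of_bool (\<not> u (i, v i, j)) * loss w (zt (i, v i, j, u (i, v i, j))))"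
    by (intro Bochner_Integration.integral_cong refl) (auto split: prod.splits simp: of_bool_def)
  have Y_sym: "expect (\<lambda>(mt,zt,v,u,w). of_bool (u (i, v i, j)) * risk (mu (mt (i, v i))) loss w)
      = expect (\<lambda>(mt,zt,v,u,w). of_bool (\<not> u (i, v i, j)) * risk (mu (mt (i, v i))) loss w)"
    by (rule expectation_swap_samples[OF m(4) risk_le m(3) risk_le])
      (auto simp: i j clientIdx_def uIdx_def)
  have Z_sym: "expect (\<lambda>(mt,zt,v,u,w). of_bool (u (i, v i, j)) * loss w (zt (i, v i, j, u (i, v i, j))))
      = expect (\<lambda>(mt,zt,v,u,w). of_bool (\<not> u (i, v i, j)) * loss w (zt (i, v i, j, u (i, v i, j))))"
    by (rule expectation_swap_samples[OF m(6) loss_le m(5) loss_le])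
      (auto simp: i j zIdx_def uIdx_def)
  from shifted_rademacher_identity[OF X[unfolded case_prod_unfold]
      integrable_client_risk[OF i, unfolded case_prod_unfold]
      integrable_sample_loss[OF i j, unfolded case_prod_unfold]
      b[unfolded case_prod_unfold] X_on[unfolded case_prod_unfold]
      X_off[unfolded case_prod_unfold] Y_sym[unfolded case_prod_unfold] Z_sym[unfolded case_prod_unfold] C]
  show ?thesis by (simp add: case_prod_unfold)
qed

lemma expectation_client_average:
  "expect (\<lambda>(mt,zt,v,u,w). 1 / real K * (\<Sum>i<K. risk (mu (mt (i, v i))) loss w))
    = 1 / real K * (\<Sum>i<K. expect (\<lambda>(mt,zt,v,u,w). risk (mu (mt (i, v i))) loss w))"
proof -
  have avg: "(\<lambda>(mt,zt,v,u,w). 1 / real K * (\<Sum>i<K. risk (mu (mt (i, v i))) loss w))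
      = (\<lambda>x. 1 / real K * (\<Sum>i<K. (\<lambda>(mt,zt,v,u,w). risk (mu (mt (i, v i))) loss w) x))"
    by (auto simp: fun_eq_iff split: prod.splits)
  show ?thesis
    unfolding avg by (simp add: Bochner_Integration.integral_sum integrable_client_risk)
qed

lemma expectation_emp_risk:
  "expect (\<lambda>(mt,zt,v,u,w). emp_risk K n loss (sample_of K n zt v u) w)
    = 1 / (real K * real n) * (\<Sum>i<K. \<Sum>j<n. expect (\<lambda>(mt,zt,v,u,w). loss w (zt (i, v i, j, u (i, v i, j)))))"
proof -
  define Zf where "Zf i j = (\<lambda>(mt :: nat \<times> bool \<Rightarrow> 'c, zt, v :: nat \<Rightarrow> bool, u :: nat \<times> bool \<times> nat \<Rightarrow> bool, w).
    loss w (zt (i, v i, j, u (i, v i, j))))" for i j :: nat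
  have Zf_int: "integrable (fl_joint D mu Zm Wm A K n) (Zf i j)" if "i \<in> {..<K}" "j \<in> {..<n}" for i j
    using integrable_sample_loss that by (simp add: Zf_def)
  have emp: "(\<lambda>(mt,zt,v,u,w). emp_risk K n loss (sample_of K n zt v u) w)
      = (\<lambda>x. 1 / (real K * real n) * (\<Sum>i<K. \<Sum>j<n. Zf i j x))"
    by (auto simp: fun_eq_iff emp_risk_def sample_of_def sIdx_def Zf_def split: prod.splits intro!: sum.cong)
  have "expect (\<lambda>x. \<Sum>i<K. \<Sum>j<n. Zf i j x) = (\<Sum>i<K. expect (\<lambda>x. \<Sum>j<n. Zf i j x))"
    by (rule Bochner_Integration.integral_sum) (auto intro!: Bochner_Integration.integrable_sum Zf_int)
  also have "\<dots> = (\<Sum>i<K. \<Sum>j<n. expect (Zf i j))"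
    by (rule sum.cong[OF refl], rule Bochner_Integration.integral_sum) (auto intro: Zf_int)
  finally show ?thesis unfolding emp by (simp add: Zf_def)
qed

lemma client_level_identity:
  assumes C: "C + 2 \<noteq> 0"
  shows "expect (\<lambda>(mt,zt,v,u,w). pop_risk D mu loss w)
      - (1 + C) * expect (\<lambda>(mt,zt,v,u,w). 1 / real K * (\<Sum>i<K. risk (mu (mt (i, v i))) loss w))
    = (2 + C) / real K * (\<Sum>i<K. expect (\<lambda>(mt,zt,v,u,w).
        ((-1::real) ^ (1 - of_bool (v i)) - C / (C + 2)) * loss w (zt (i, False, 0, \<not> u (i, False, 0)))))"
proof -
  have "(2 + C) / real K * (\<Sum>i<K. expect (\<lambda>(mt,zt,v,u,w).
        ((-1::real) ^ (1 - of_bool (v i)) - C / (C + 2)) * loss w (zt (i, False, 0, \<not> u (i, False, 0)))))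
      = 1 / real K * (\<Sum>i<K. expect (\<lambda>(mt,zt,v,u,w). pop_risk D mu loss w)
          - (1 + C) * expect (\<lambda>(mt,zt,v,u,w). risk (mu (mt (i, v i))) loss w))"
    using client_gap_term[OF _ C] by (simp add: sum_distrib_left)
  also have "\<dots> = expect (\<lambda>(mt,zt,v,u,w). pop_risk D mu loss w)
      - (1 + C) * (1 / real K * (\<Sum>i<K. expect (\<lambda>(mt,zt,v,u,w). risk (mu (mt (i, v i))) loss w)))"
    using Kpos by (simp add: sum_subtractf sum_distrib_left[symmetric] field_simps)
      (simp add: sum.distrib sum_distrib_left)
  finally show ?thesis unfolding expectation_client_average by simp
qed

lemma sample_level_identity:
  assumes C: "C + 2 \<noteq> 0"
  shows "expect (\<lambda>(mt,zt,v,u,w). 1 / real K * (\<Sum>i<K. risk (mu (mt (i, v i))) loss w))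
      - (1 + C) * expect (\<lambda>(mt,zt,v,u,w). emp_risk K n loss (sample_of K n zt v u) w)
    = (2 + C) / (real K * real n) * (\<Sum>i<K. \<Sum>j<n. expect (\<lambda>(mt,zt,v,u,w).
        ((-1::real) ^ (1 - of_bool (u (i, v i, j))) - C / (C + 2)) * loss w (zt (i, v i, j, False))))"
proof -
  have "(2 + C) / (real K * real n) * (\<Sum>i<K. \<Sum>j<n. expect (\<lambda>(mt,zt,v,u,w).
        ((-1::real) ^ (1 - of_bool (u (i, v i, j))) - C / (C + 2)) * loss w (zt (i, v i, j, False))))
      = 1 / (real K * real n) * (\<Sum>i<K. \<Sum>j<n. expect (\<lambda>(mt,zt,v,u,w). risk (mu (mt (i, v i))) loss w)
          - (1 + C) * expect (\<lambda>(mt,zt,v,u,w). loss w (zt (i, v i, j, u (i, v i, j)))))"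
    using sample_gap_term[OF _ _ C] by (simp add: sum_distrib_left)
  also have "\<dots> = 1 / real K * (\<Sum>i<K. expect (\<lambda>(mt,zt,v,u,w). risk (mu (mt (i, v i))) loss w))
      - (1 + C) * (1 / (real K * real n) *
          (\<Sum>i<K. \<Sum>j<n. expect (\<lambda>(mt,zt,v,u,w). loss w (zt (i, v i, j, u (i, v i, j))))))"
    using Kpos npos by (simp add: sum_subtractf sum_distrib_left[symmetric] field_simps)
      (simp add: sum.distrib sum_distrib_left)
  finally show ?thesis unfolding expectation_client_average expectation_emp_risk by simp
qed

end

theorem mainTheorem10:
  fixes D :: "'c measure" and mu :: "'c \<Rightarrow> 'z measure" and Zm :: "'z measure"
    and Wm :: "'w measure" and A :: "(nat \<times> nat \<Rightarrow> 'z) \<Rightarrow> 'w measure"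
    and loss :: "'w \<Rightarrow> 'z \<Rightarrow> real" and K n :: nat and C1 C2 :: real
  assumes "prob_space D"
    and "mu \<in> D \<rightarrow>\<^sub>M prob_algebra Zm"
    and "A \<in> PiM (sIdx K n) (\<lambda>_. Zm) \<rightarrow>\<^sub>M prob_algebra Wm"
    and "case_prod loss \<in> borel_measurable (Wm \<Otimes>\<^sub>M Zm)"
    and "\<forall>w z. 0 \<le> loss w z"
    and "\<exists>B. \<forall>w z. loss w z \<le> B"
    and "0 < K" and "0 < n"
    and "0 < C1" and "0 < C2"
  shows
   "(\<integral>(mt, zt, v, u, w). pop_risk D mu loss w \<partial>fl_joint D mu Zm Wm A K n)
      - (1 + C1) * (\<integral>(mt, zt, v, u, w). (1 / real K) * (\<Sum>i<K. risk (mu (mt (i, v i))) loss w)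
                     \<partial>fl_joint D mu Zm Wm A K n)
    = (2 + C1) / real K *
      (\<Sum>i<K. \<integral>(mt, zt, v, u, w).
          ((-1::real) ^ (1 - of_bool (v i)) - C1 / (C1 + 2))
          * loss w (zt (i, False, 0, \<not> u (i, False, 0)))
        \<partial>fl_joint D mu Zm Wm A K n)
   \<and>
   (\<integral>(mt, zt, v, u, w). (1 / real K) * (\<Sum>i<K. risk (mu (mt (i, v i))) loss w)
                     \<partial>fl_joint D mu Zm Wm A K n)
      - (1 + C2) * (\<integral>(mt, zt, v, u, w). emp_risk K n loss (sample_of K n zt v u) w
                     \<partial>fl_joint D mu Zm Wm A K n)
    = (2 + C2) / (real K * real n) *
      (\<Sum>i<K. \<Sum>j<n. \<integral>(mt, zt, v, u, w).
          ((-1::real) ^ (1 - of_bool (u (i, v i, j))) - C2 / (C2 + 2))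
          * loss w (zt (i, v i, j, False))
        \<partial>fl_joint D mu Zm Wm A K n)"
proof -
  obtain B where "\<forall>w z. loss w z \<le> B" using assms(6) by blast
  then have "fl_setting D mu Zm Wm A loss K n B"
    unfolding fl_setting_def using assms(1-5,7,8) by blast
  then interpret fl_setting D mu Zm Wm A loss K n B .
  have "C1 + 2 \<noteq> 0" and "C2 + 2 \<noteq> 0" using assms(9,10) by simp_all
  then show ?thesis by (intro conjI client_level_identity sample_level_identity)
qed

end
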